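(* Let $M\subset\mathbf{R}^{n+1}$ be a smooth closed connected mean convex hypersurface and let $u$ be the arrival time of the mean curvature flow starting from $M$, and assume $u$ is $C^2$. Suppose that $\nabla u(0)=0$ and $\mathrm{Hess}_u(0)$ has kernel $K$. Then there exists $\epsilon>0$ such that $B_{\epsilon}\cap\mathcal{S}$ is the graph of a $C^1$ map $$f:\Omega\subset K\to K^{\perp},$$ where $\Omega$ is a connected open subset of $K$ containing $0$. Furthermore, $u$ is constant on $B_{\epsilon}\cap\mathcal{S}$.
   Context: Mean convex means the mean curvature is non-negative. The arrival time $u$ is defined on the compact domain bounded by $M$: $u(x)$ is the time at which the front passes through $x$; equivalently $u$ is the Lipschitz viscosity solution of $-1=|\nabla u|\,\mathrm{div}(\nabla u/|\nabla u|)$ with $u=0$ on $M$. The singular set is $\mathcal{S}=\{x:\nabla u(x)=0\}$. $B_\epsilon$ denotes the ball of radius $\epsilon$ centered at $0$. *)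

theory Defs
  imports "HOL-Analysis.Analysis"
begin

text \<open>Points of R^(n+1) are vectors of type real^'n (CARD('n) = n+1).\<close>

text \<open>P is (for a list of coordinate indices) is the iterated partial
  derivative; P (i # is) is the partial derivative in direction e_i of P is.\<close>
definition Ck_on :: "nat \<Rightarrow> (real^'n) set \<Rightarrow> (real^'n \<Rightarrow> real) \<Rightarrow> bool" where
  "Ck_on k S f \<longleftrightarrow>
     (\<exists>P :: 'n list \<Rightarrow> real^'n \<Rightarrow> real.
        (\<forall>x\<in>S. P [] x = f x) \<and>
        (\<forall>is i x. length is < k \<and> x \<in> S \<longrightarrow>
            ((\<lambda>t. P is (x + t *\<^sub>R axis i 1)) has_real_derivative P (i # is) x) (at 0)) \<and>
        (\<forall>is. length is \<le> k \<longrightarrow> continuous_on S (P is)))"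

definition smooth_on :: "(real^'n) set \<Rightarrow> (real^'n \<Rightarrow> real) \<Rightarrow> bool" where
  "smooth_on S f \<longleftrightarrow> (\<forall>k. Ck_on k S f)"

definition grad :: "(real^'n \<Rightarrow> real) \<Rightarrow> real^'n \<Rightarrow> real^'n" where
  "grad f x = (THE v. (f has_derivative (\<lambda>h. v \<bullet> h)) (at x))"

definition hess :: "(real^'n \<Rightarrow> real) \<Rightarrow> real^'n \<Rightarrow> real^'n^'n" where
  "hess f x = (THE A. (grad f has_derivative (\<lambda>h. A *v h)) (at x))"

text \<open>Mean curvature of the level set {g = g x} at x, w.r.t. the normal grad g/|grad g|:
  H = div(grad g / |grad g|).  For g = |x|^2 - 1 this gives n on the unit sphere.\<close>
definition levelset_mean_curv :: "(real^'n \<Rightarrow> real) \<Rightarrow> real^'n \<Rightarrow> real" where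
  "levelset_mean_curv g x =
     (trace (hess g x) - (grad g x \<bullet> (hess g x *v grad g x)) / (norm (grad g x))\<^sup>2)
     / norm (grad g x)"

text \<open>M is a smooth closed connected mean convex hypersurface in R^(n+1), bounding the
  compact domain D: M = {g = 0} is a regular level set of a smooth function g,
  D = {g \<le> 0} is compact, M is connected, and H \<ge> 0 on M (H w.r.t. the inward normal).\<close>
definition mean_convex_hypersurface ::
    "(real^'n) set \<Rightarrow> (real^'n) set \<Rightarrow> bool" where
  "mean_convex_hypersurface M D \<longleftrightarrow>
     (\<exists>g. smooth_on UNIV g \<and> M = {x. g x = 0} \<and> D = {x. g x \<le> 0} \<and>
          M \<noteq> {} \<and> compact D \<and> connected M \<and>
          (\<forall>x\<in>M. grad g x \<noteq> 0) \<and> (\<forall>x\<in>M. levelset_mean_curv g x \<ge> 0))"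

text \<open>Viscosity solution (Evans-Spruck / Chen-Giga-Goto) of the level set flow equation
  -1 = |Du| div(Du/|Du|) in the interior of D, i.e. F(Du, D^2u) = 0 with
  F(p,X) = -tr((I - p p^T/|p|^2) X) - 1, using the semicontinuous envelopes at p = 0.\<close>
definition viscosity_subsol :: "(real^'n) set \<Rightarrow> (real^'n \<Rightarrow> real) \<Rightarrow> bool" where
  "viscosity_subsol U u \<longleftrightarrow>
     (\<forall>\<phi> x0 r. x0 \<in> U \<and> r > 0 \<and> ball x0 r \<subseteq> U \<and> Ck_on 2 (ball x0 r) \<phi> \<and>
        (\<forall>y\<in>ball x0 r. u y - \<phi> y \<le> u x0 - \<phi> x0) \<longrightarrow>
        (let p = grad \<phi> x0; X = hess \<phi> x0 in
          (p \<noteq> 0 \<longrightarrow> trace X - (p \<bullet> (X *v p)) / (norm p)\<^sup>2 + 1 \<ge> 0) \<and>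
          (p = 0 \<longrightarrow> (\<exists>e. norm e = 1 \<and> trace X - e \<bullet> (X *v e) + 1 \<ge> 0))))"

definition viscosity_supersol :: "(real^'n) set \<Rightarrow> (real^'n \<Rightarrow> real) \<Rightarrow> bool" where
  "viscosity_supersol U u \<longleftrightarrow>
     (\<forall>\<phi> x0 r. x0 \<in> U \<and> r > 0 \<and> ball x0 r \<subseteq> U \<and> Ck_on 2 (ball x0 r) \<phi> \<and>
        (\<forall>y\<in>ball x0 r. u y - \<phi> y \<ge> u x0 - \<phi> x0) \<longrightarrow>
        (let p = grad \<phi> x0; X = hess \<phi> x0 in
          (p \<noteq> 0 \<longrightarrow> trace X - (p \<bullet> (X *v p)) / (norm p)\<^sup>2 + 1 \<le> 0) \<and>
          (p = 0 \<longrightarrow> (\<exists>e. norm e = 1 \<and> trace X - e \<bullet> (X *v e) + 1 \<le> 0))))"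

text \<open>u is the arrival time of the MCF starting from M = frontier of the compact domain D:
  the Lipschitz viscosity solution on D with u = 0 on M.\<close>
definition arrival_time ::
    "(real^'n) set \<Rightarrow> (real^'n) set \<Rightarrow> (real^'n \<Rightarrow> real) \<Rightarrow> bool" where
  "arrival_time M D u \<longleftrightarrow>
     (\<exists>L. lipschitz_on L D u) \<and> (\<forall>x\<in>M. u x = 0) \<and>
     viscosity_subsol (interior D) u \<and> viscosity_supersol (interior D) u"

definition singular_set :: "(real^'n) set \<Rightarrow> (real^'n \<Rightarrow> real) \<Rightarrow> (real^'n) set" where
  "singular_set D u = {x \<in> interior D. grad u x = 0}"

definition C1_on :: "(real^'n) set \<Rightarrow> (real^'n \<Rightarrow> real^'n) \<Rightarrow> bool" where
  "C1_on \<Omega> f \<longleftrightarrow>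
     (\<exists>f' :: real^'n \<Rightarrow> ((real^'n) \<Rightarrow>\<^sub>L (real^'n)).
        (\<forall>x\<in>\<Omega>. (f has_derivative blinfun_apply (f' x)) (at x within \<Omega>)) \<and>
        continuous_on \<Omega> f')"

end

theory Submission
  imports Defs
begin

text \<open>
  Where Du \<noteq> 0, a C^2 viscosity solution satisfies the level set equation classically:
  tr D^2u - \<langle>D^2u q, q\<rangle> / |q|^2 = -1 with q = Du. At the critical point 0 the supersolution
  property forces H = D^2u(0) \<noteq> 0, and evaluating the equation along rays shows tr H + 1 \<noteq> 0.
  Comparing the equation at nearby points with H shows that near 0 the gradient can lie in
  K = ker H only where it vanishes. Let p be the orthogonal projection onto K. The map
  \<Phi> = p + Du has invertible derivative p + H at 0 (H is symmetric, so its range is orthogonal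
  to K), and if g is a local inverse of \<Phi>, then for y \<in> K near 0 the point g y is critical,
  because Du(g y) = y - p(g y) \<in> K. Hence the critical set near 0 is the graph of
  f(y) = g y - y over a domain in K; f is C^1 and 1/2-Lipschitz, which makes the domain
  star-shaped, and u is constant along the graph because Du vanishes there.
\<close>

section \<open>Derivatives in coordinates\<close>

lemma abs_diff_le_of_deriv_bound:
  fixes \<phi> :: "real \<Rightarrow> real"
  assumes d: "\<And>t. \<bar>t\<bar> \<le> \<bar>s\<bar> \<Longrightarrow> (\<phi> has_real_derivative \<phi>' t) (at t)"
    and b: "\<And>t. \<bar>t\<bar> \<le> \<bar>s\<bar> \<Longrightarrow> \<bar>\<phi>' t\<bar> \<le> e"
  shows "\<bar>\<phi> s - \<phi> 0\<bar> \<le> e * \<bar>s\<bar>"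
proof (cases "s = 0")
  case True then show ?thesis by simp
next
  case False
  show ?thesis
  proof (cases "s > 0")
    case True
    obtain z where z: "0 < z" "z < s" "\<phi> s - \<phi> 0 = (s - 0) * \<phi>' z"
      using MVT2[of 0 s \<phi> \<phi>'] True d by auto
    have "\<bar>\<phi>' z\<bar> \<le> e" using b z by auto
    then show ?thesis using z True by (simp add: abs_mult mult.commute mult_left_mono)
  next
    case False
    with \<open>s \<noteq> 0\<close> have s: "s < 0" by auto
    obtain z where z: "s < z" "z < 0" "\<phi> 0 - \<phi> s = (0 - s) * \<phi>' z"
      using MVT2[of s 0 \<phi> \<phi>'] s d by auto
    have "\<bar>\<phi>' z\<bar> \<le> e" using b z by auto
    then have "\<bar>\<phi> 0 - \<phi> s\<bar> \<le> e * \<bar>s\<bar>" using z s by (simp add: abs_mult mult.commute mult_left_mono)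
    then show ?thesis by simp
  qed
qed

lemma abs_increment_along_line_le:
  fixes F :: "real^'n \<Rightarrow> real"
  assumes deriv: "\<And>t. \<bar>t\<bar> \<le> \<bar>s\<bar> \<Longrightarrow> ((\<lambda>\<tau>. F ((z + t *\<^sub>R v) + \<tau> *\<^sub>R v)) has_real_derivative D t) (at 0)"
    and bound: "\<And>t. \<bar>t\<bar> \<le> \<bar>s\<bar> \<Longrightarrow> \<bar>D t - d\<bar> \<le> e"
  shows "\<bar>F (z + s *\<^sub>R v) - F z - s * d\<bar> \<le> e * \<bar>s\<bar>"
proof -
  have "\<bar>(F (z + s *\<^sub>R v) - s * d) - (F (z + 0 *\<^sub>R v) - 0 * d)\<bar> \<le> e * \<bar>s\<bar>"
  proof (rule abs_diff_le_of_deriv_bound[where \<phi>' = "\<lambda>t. D t - d"])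
    fix t assume t: "\<bar>t\<bar> \<le> \<bar>s\<bar>"
    have "((\<lambda>\<tau>. F (z + (\<tau> + t) *\<^sub>R v)) has_real_derivative D t) (at 0)"
      using deriv[OF t] by (simp add: algebra_simps)
    then have "((\<lambda>\<tau>. F (z + \<tau> *\<^sub>R v)) has_real_derivative D t) (at t)"
      using DERIV_shift[of "\<lambda>\<tau>. F (z + \<tau> *\<^sub>R v)" "D t" 0 t] by simp
    then show "((\<lambda>t. F (z + t *\<^sub>R v) - t * d) has_real_derivative D t - d) (at t)"
      by (auto intro!: derivative_eq_intros)
    show "\<bar>D t - d\<bar> \<le> e"
      by (rule bound[OF t])
  qed
  then show ?thesis
    by simp
qed

lemma sum_axis_component:
  fixes h :: "real^'n"
  shows "(\<Sum>i\<in>A. h$i *\<^sub>R axis i (1::real)) $ k = (if k \<in> A then h$k else 0)"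
proof -
  have "(\<Sum>i\<in>A. h$i *\<^sub>R axis i (1::real)) $ k = (\<Sum>i\<in>A. h$i * (axis i 1 $ k))"
    by (simp add: sum_component)
  also have "\<dots> = (\<Sum>i\<in>A. if i = k then h$k else 0)"
    by (rule sum.cong) (auto simp: axis_def)
  also have "\<dots> = (if k \<in> A then h$k else 0)"
    by (simp add: sum.delta')
  finally show ?thesis .
qed

lemma has_derivative_of_continuous_partials:
  fixes F :: "real^'n \<Rightarrow> real" and G :: "'n \<Rightarrow> real^'n \<Rightarrow> real"
  assumes U: "open U" and x: "x \<in> U"
    and d: "\<And>y i. y \<in> U \<Longrightarrow> ((\<lambda>t. F (y + t *\<^sub>R axis i 1)) has_real_derivative G i y) (at 0)"
    and c: "\<And>i. continuous_on U (G i)"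
  shows "(F has_derivative (\<lambda>h. (\<chi> i. G i x) \<bullet> h)) (at x)"
  unfolding has_derivative_at_alt
proof (intro conjI allI impI)
  show "bounded_linear (\<lambda>h. (\<chi> i. G i x) \<bullet> h)" by (rule bounded_linear_inner_right)
  fix e :: real assume e: "e > 0"
  define e' where "e' = e / real CARD('n)"
  have e': "e' > 0" using e by (simp add: e'_def)
  have cv: "continuous_on U (\<lambda>y. \<chi> i. G i y)" by (intro continuous_on_vec_lambda c)
  obtain d1 where d1: "d1 > 0" "\<And>y. y \<in> U \<Longrightarrow> dist y x < d1 \<Longrightarrow> dist (\<chi> i. G i y) (\<chi> i. G i x) < e'"
    using cv x e' unfolding continuous_on_iff by metis
  obtain d2 where d2: "d2 > 0" "ball x d2 \<subseteq> U" using U x open_contains_ball by blast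
  define \<delta> where "\<delta> = min d1 d2"
  have \<delta>: "\<delta> > 0" using d1 d2 by (simp add: \<delta>_def)
  have Gb: "\<bar>G i y - G i x\<bar> \<le> e'" if "dist y x < \<delta>" for i y
  proof -
    have "y \<in> U" using that d2 by (auto simp: \<delta>_def dist_commute)
    then have "dist (\<chi> i. G i y) (\<chi> i. G i x) < e'" using d1 that by (simp add: \<delta>_def)
    then have "norm ((\<chi> i. G i y) - (\<chi> i. G i x)) < e'" by (simp add: dist_norm)
    moreover have "\<bar>((\<chi> i. G i y) - (\<chi> i. G i x)) $ i\<bar> \<le> norm ((\<chi> i. G i y) - (\<chi> i. G i x))"
      by (rule component_le_norm_cart)
    ultimately show ?thesis by simp
  qed
  show "\<exists>d>0. \<forall>y. norm (y - x) < d \<longrightarrow>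
          norm (F y - F x - (\<chi> i. G i x) \<bullet> (y - x)) \<le> e * norm (y - x)"
  proof (intro exI conjI allI impI)
    show "\<delta> > 0" by (rule \<delta>)
    fix y assume y: "norm (y - x) < \<delta>"
    define h where "h = y - x"
    have hn: "norm h < \<delta>" using y by (simp add: h_def)
    let ?hA = "\<lambda>A. (\<Sum>i\<in>A. h$i *\<^sub>R axis i (1::real))"
    have hAle: "norm (?hA A + t *\<^sub>R axis j 1) \<le> norm h" if "j \<notin> A" "\<bar>t\<bar> \<le> \<bar>h$j\<bar>" for A j t
    proof (rule norm_le_componentwise_cart)
      fix k
      show "norm ((?hA A + t *\<^sub>R axis j 1) $ k) \<le> norm (h $ k)"
      proof -
        have "(?hA A + t *\<^sub>R axis j 1) $ k = (if k \<in> A then h$k else 0) + t * (axis j 1 $ k)"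
          by (simp only: vector_add_component sum_axis_component) simp
        then show ?thesis using that by (auto simp: axis_def)
      qed
    qed
    have main: "\<bar>F (x + ?hA A) - F x - (\<Sum>i\<in>A. h$i * G i x)\<bar> \<le> real (card A) * e' * norm h"
      if "finite A" for A
      using that
    proof (induction A rule: finite_induct)
      case empty then show ?case by simp
    next
      case (insert j A)
      define z where "z = x + ?hA A"
      define s where "s = h$j"
      have eq: "x + ?hA (insert j A) = z + s *\<^sub>R axis j 1"
        using insert by (simp add: z_def s_def algebra_simps)
      have pt: "dist (z + t *\<^sub>R axis j 1) x < \<delta>" if "\<bar>t\<bar> \<le> \<bar>s\<bar>" for t
      proof -
        have "dist (z + t *\<^sub>R axis j 1) x = norm (?hA A + t *\<^sub>R axis j 1)"
          by (simp add: z_def dist_norm)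
        also have "\<dots> \<le> norm h" using hAle insert that by (simp add: s_def)
        finally show ?thesis using hn by simp
      qed
      have inU: "z + t *\<^sub>R axis j 1 \<in> U" if "\<bar>t\<bar> \<le> \<bar>s\<bar>" for t
        using pt[OF that] d2 by (auto simp: \<delta>_def dist_commute)
      have one: "\<bar>F (z + s *\<^sub>R axis j 1) - F z - s * G j x\<bar> \<le> e' * \<bar>s\<bar>"
        by (rule abs_increment_along_line_le[where D = "\<lambda>t. G j (z + t *\<^sub>R axis j 1)"])
          (use d inU Gb pt in auto)
      have sh: "\<bar>s\<bar> \<le> norm h" unfolding s_def by (rule component_le_norm_cart)
      have e1: "F (x + ?hA (insert j A)) = F (z + s *\<^sub>R axis j 1)" using eq by simp
      have e2: "(\<Sum>i\<in>insert j A. h$i * G i x) = s * G j x + (\<Sum>i\<in>A. h$i * G i x)"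
        using insert by (simp add: s_def)
      have "\<bar>F (x + ?hA (insert j A)) - F x - (\<Sum>i\<in>insert j A. h$i * G i x)\<bar>
          = \<bar>(F (z + s *\<^sub>R axis j 1) - F z - s * G j x)
             + (F (x + ?hA A) - F x - (\<Sum>i\<in>A. h$i * G i x))\<bar>"
        unfolding e1 e2 by (simp add: z_def)
      also have "\<dots> \<le> e' * \<bar>s\<bar> + real (card A) * e' * norm h"
        using one insert.IH by linarith
      also have "\<dots> \<le> e' * norm h + real (card A) * e' * norm h"
        using sh e' by (simp add: mult_left_mono)
      also have "\<dots> = real (card (insert j A)) * e' * norm h"
        using insert by (simp add: algebra_simps)
      finally show ?case .
    qed
    have hU: "?hA UNIV = h"
      using basis_expansion[of h] by (simp add: scalar_mult_eq_scaleR)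
    have lin: "(\<Sum>i\<in>UNIV. h$i * G i x) = (\<chi> i. G i x) \<bullet> h"
      by (simp add: inner_vec_def mult.commute)
    have "\<bar>F (x + h) - F x - (\<chi> i. G i x) \<bullet> h\<bar> \<le> real CARD('n) * e' * norm h"
      using main[of UNIV] hU lin by simp
    also have "\<dots> = e * norm h" by (simp add: e'_def)
    finally show "norm (F y - F x - (\<chi> i. G i x) \<bullet> (y - x)) \<le> e * norm (y - x)"
      by (simp add: h_def)
  qed
qed

lemma has_derivative_vec_componentwise:
  fixes f :: "real^'n \<Rightarrow> real^'m"
  assumes "\<And>i. ((\<lambda>x. f x $ i) has_derivative (\<lambda>h. f' h $ i)) (at a)"
  shows "(f has_derivative f') (at a)"
proof -
  have "\<forall>b\<in>Basis. ((\<lambda>x. f x \<bullet> b) has_derivative (\<lambda>x. f' x \<bullet> b)) (at a within UNIV)"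
  proof
    fix b :: "real^'m" assume "b \<in> Basis"
    then obtain i where b: "b = axis i 1" unfolding Basis_vec_def by auto
    show "((\<lambda>x. f x \<bullet> b) has_derivative (\<lambda>x. f' x \<bullet> b)) (at a within UNIV)"
      using assms[of i] by (simp add: b inner_axis)
  qed
  then show ?thesis using has_derivative_componentwise_within[of f f' a UNIV] by simp
qed

lemma grad_eqI:
  assumes "(f has_derivative (\<lambda>h. v \<bullet> h)) (at x)"
  shows "grad f x = v"
  unfolding grad_def
proof (rule the_equality)
  show "(f has_derivative (\<lambda>h. v \<bullet> h)) (at x)" by fact
  fix w assume "(f has_derivative (\<lambda>h. w \<bullet> h)) (at x)"
  then have "(\<lambda>h. w \<bullet> h) = (\<lambda>h. v \<bullet> h)" using assms has_derivative_unique by blast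
  then have "w \<bullet> (w - v) = v \<bullet> (w - v)" by metis
  then have "(w - v) \<bullet> (w - v) = 0" by (simp add: inner_diff_left)
  then show "w = v" by simp
qed

lemma hess_eqI:
  assumes "(grad f has_derivative (\<lambda>h. A *v h)) (at x)"
  shows "hess f x = A"
  unfolding hess_def
proof (rule the_equality)
  show "(grad f has_derivative (\<lambda>h. A *v h)) (at x)" by fact
  fix B assume "(grad f has_derivative (\<lambda>h. B *v h)) (at x)"
  then have "(\<lambda>h. B *v h) = (\<lambda>h. A *v h)" using assms has_derivative_unique by blast
  then show "B = A" by (metis matrix_eq)
qed

lemma Ck_on_2_derivatives:
  fixes u :: "real^'n \<Rightarrow> real"
  assumes "Ck_on 2 U u" and U: "open U"
  shows grad_has_derivative: "\<And>x. x \<in> U \<Longrightarrow> (u has_derivative (\<lambda>h. grad u x \<bullet> h)) (at x)"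
    and hess_has_derivative: "\<And>x. x \<in> U \<Longrightarrow> (grad u has_derivative (\<lambda>h. hess u x *v h)) (at x)"
    and continuous_on_hess: "continuous_on U (hess u)"
proof -
  obtain P :: "'n list \<Rightarrow> real^'n \<Rightarrow> real" where
    P0: "\<And>x. x \<in> U \<Longrightarrow> P [] x = u x"
    and Pd: "\<And>is i x. length is < 2 \<Longrightarrow> x \<in> U \<Longrightarrow>
               ((\<lambda>t. P is (x + t *\<^sub>R axis i 1)) has_real_derivative P (i # is) x) (at 0)"
    and Pc: "\<And>is. length is \<le> 2 \<Longrightarrow> continuous_on U (P is)"
    using assms(1) unfolding Ck_on_def by blast
  define G where "G x = (\<chi> i. P [i] x)" for x
  define H where "H x = (\<chi> i j. P [j, i] x)" for x
  have dG: "(G has_derivative (\<lambda>h. H x *v h)) (at x)" if "x \<in> U" for x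
  proof (rule has_derivative_vec_componentwise)
    fix i
    have "(P [i] has_derivative (\<lambda>h. (\<chi> j. P [j, i] x) \<bullet> h)) (at x)"
      by (rule has_derivative_of_continuous_partials[OF U that]) (auto intro: Pd Pc)
    moreover have "(\<chi> j. P [j, i] x) \<bullet> h = (H x *v h) $ i" for h
      by (simp add: H_def matrix_vector_mult_def inner_vec_def mult.commute)
    ultimately show "((\<lambda>x. G x $ i) has_derivative (\<lambda>h. (H x *v h) $ i)) (at x)"
      by (simp add: G_def)
  qed
  have du: "(u has_derivative (\<lambda>h. G x \<bullet> h)) (at x)" if "x \<in> U" for x
  proof -
    have "(P [] has_derivative (\<lambda>h. G x \<bullet> h)) (at x)"
      unfolding G_def by (rule has_derivative_of_continuous_partials[OF U that]) (auto intro: Pd Pc)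
    then show ?thesis
      by (rule has_derivative_transform_within_open[OF _ U that]) (simp add: P0)
  qed
  then have grad_eq: "grad u x = G x" if "x \<in> U" for x
    using grad_eqI that by blast
  have dgrad: "(grad u has_derivative (\<lambda>h. H x *v h)) (at x)" if "x \<in> U" for x
    using dG[OF that] by (rule has_derivative_transform_within_open[OF _ U that]) (simp add: grad_eq)
  then have hess_eq: "hess u x = H x" if "x \<in> U" for x
    using hess_eqI that by blast
  show "(u has_derivative (\<lambda>h. grad u x \<bullet> h)) (at x)" if "x \<in> U" for x
    using du[OF that] grad_eq[OF that] by simp
  show "(grad u has_derivative (\<lambda>h. hess u x *v h)) (at x)" if "x \<in> U" for x
    using dgrad[OF that] hess_eq[OF that] by simp
  have "continuous_on U H"
    unfolding H_def by (intro continuous_on_vec_lambda Pc) auto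
  then show "continuous_on U (hess u)"
    by (rule continuous_on_eq) (simp add: hess_eq)
qed

lemma has_real_derivative_along_line:
  fixes F :: "real^'n \<Rightarrow> real"
  assumes "\<And>y. y \<in> S \<Longrightarrow> (F has_derivative (\<lambda>h. G y \<bullet> h)) (at y)" and "c + s *\<^sub>R v \<in> S"
  shows "((\<lambda>s. F (c + s *\<^sub>R v)) has_real_derivative (G (c + s *\<^sub>R v) \<bullet> v)) (at s)"
proof -
  have "((\<lambda>s. c + s *\<^sub>R v) has_derivative (\<lambda>r. r *\<^sub>R v)) (at s)"
    by (auto intro!: derivative_eq_intros)
  from has_derivative_compose[OF this assms(1)[OF assms(2)]]
  have "((\<lambda>s. F (c + s *\<^sub>R v)) has_derivative (\<lambda>r. G (c + s *\<^sub>R v) \<bullet> (r *\<^sub>R v))) (at s)"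
    by simp
  moreover have "(\<lambda>r. G (c + s *\<^sub>R v) \<bullet> (r *\<^sub>R v)) = (*) (G (c + s *\<^sub>R v) \<bullet> v)"
    by (auto simp: fun_eq_iff)
  ultimately show ?thesis
    unfolding has_field_derivative_def by simp
qed

lemma mult_axis_component: "((H::real^'n^'n) *v (t *\<^sub>R axis j 1)) $ i = t * H $ i $ j"
proof -
  have "(H *v (t *\<^sub>R axis j 1)) $ i = (\<Sum>k\<in>UNIV. H$i$k * (t *\<^sub>R axis j 1) $ k)"
    by (simp add: matrix_vector_mult_def)
  also have "\<dots> = (\<Sum>k\<in>UNIV. if k = j then t * H $ i $ j else 0)"
    by (rule sum.cong) (auto simp: axis_def)
  finally show ?thesis by simp
qed

lemma second_difference_estimate:
  fixes F :: "real^'n \<Rightarrow> real" and G :: "real^'n \<Rightarrow> real^'n" and H :: "real^'n^'n"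
  assumes dF: "\<And>y. y \<in> ball a \<delta> \<Longrightarrow> (F has_derivative (\<lambda>h. G y \<bullet> h)) (at y)"
    and b: "\<And>y. y \<in> ball a \<delta> \<Longrightarrow> norm (G y - G a - H *v (y - a)) \<le> \<epsilon> * norm (y - a)"
    and e0: "\<epsilon> \<ge> 0" and t: "0 < t" "2 * t < \<delta>"
  shows "\<bar>(F (a + t *\<^sub>R axis j 1 + t *\<^sub>R axis i 1) - F (a + t *\<^sub>R axis i 1))
            - (F (a + t *\<^sub>R axis j 1) - F a) - t * t * H $ i $ j\<bar> \<le> (4 * \<epsilon> * t) * t"
proof -
  define c1 where "c1 = a + t *\<^sub>R axis j 1"
  let ?\<phi> = "\<lambda>s. F (c1 + s *\<^sub>R axis i 1) - F (a + s *\<^sub>R axis i 1) - s * (t * H $ i $ j)"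
  have nrm: "norm (r *\<^sub>R axis i 1 + q *\<^sub>R axis j (1::real)) \<le> \<bar>r\<bar> + \<bar>q\<bar>" for r q
    by (rule order_trans[OF norm_triangle_ineq]) (simp add: norm_axis_1)
  have "\<bar>?\<phi> t - ?\<phi> 0\<bar> \<le> (4 * \<epsilon> * t) * \<bar>t\<bar>"
  proof (rule abs_diff_le_of_deriv_bound[where \<phi>' = "\<lambda>s. G (c1 + s *\<^sub>R axis i 1) $ i - G (a + s *\<^sub>R axis i 1) $ i - t * H $ i $ j"])
    fix s assume s: "\<bar>s\<bar> \<le> \<bar>t\<bar>"
    have y1b: "c1 + s *\<^sub>R axis i 1 \<in> ball a \<delta>"
    proof -
      have "norm (s *\<^sub>R axis i 1 + t *\<^sub>R axis j (1::real)) \<le> \<bar>s\<bar> + \<bar>t\<bar>" by (rule nrm)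
      moreover have "dist a (c1 + s *\<^sub>R axis i 1) = norm (s *\<^sub>R axis i 1 + t *\<^sub>R axis j (1::real))"
        by (simp add: c1_def dist_norm norm_minus_commute algebra_simps)
      ultimately show ?thesis using s t by simp
    qed
    have y2b: "a + s *\<^sub>R axis i 1 \<in> ball a \<delta>"
      using s t by (simp add: dist_norm norm_axis_1)
    have "((\<lambda>s. F (c1 + s *\<^sub>R axis i 1)) has_real_derivative (G (c1 + s *\<^sub>R axis i 1) \<bullet> axis i 1)) (at s)"
      by (rule has_real_derivative_along_line[OF dF y1b])
    moreover have "((\<lambda>s. F (a + s *\<^sub>R axis i 1)) has_real_derivative (G (a + s *\<^sub>R axis i 1) \<bullet> axis i 1)) (at s)"
      by (rule has_real_derivative_along_line[OF dF y2b])
    ultimately show "(?\<phi> has_real_derivative G (c1 + s *\<^sub>R axis i 1) $ i - G (a + s *\<^sub>R axis i 1) $ i - t * H $ i $ j) (at s)"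
      by (auto intro!: derivative_eq_intros simp: inner_axis)
    define y1 where "y1 = c1 + s *\<^sub>R axis i 1"
    define y2 where "y2 = a + s *\<^sub>R axis i 1"
    have d12: "y1 - y2 = t *\<^sub>R axis j 1" by (simp add: y1_def y2_def c1_def)
    have n1: "norm (y1 - a) \<le> 2 * t"
    proof -
      have "norm (s *\<^sub>R axis i 1 + t *\<^sub>R axis j (1::real)) \<le> \<bar>s\<bar> + \<bar>t\<bar>" by (rule nrm)
      moreover have "y1 - a = s *\<^sub>R axis i 1 + t *\<^sub>R axis j (1::real)"
        by (simp add: y1_def c1_def)
      ultimately show ?thesis using s t by simp
    qed
    have n2: "norm (y2 - a) \<le> 2 * t" using s t by (simp add: y2_def norm_axis_1)
    have "norm (G y1 - G a - H *v (y1 - a)) \<le> \<epsilon> * norm (y1 - a)"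
      using b y1b unfolding y1_def by blast
    also have "\<dots> \<le> \<epsilon> * (2 * t)" using n1 e0 by (rule mult_left_mono)
    finally have B1: "\<bar>(G y1 - G a - H *v (y1 - a)) $ i\<bar> \<le> \<epsilon> * (2 * t)"
      by (rule order_trans[OF component_le_norm_cart])
    have "norm (G y2 - G a - H *v (y2 - a)) \<le> \<epsilon> * norm (y2 - a)"
      using b y2b unfolding y2_def by blast
    also have "\<dots> \<le> \<epsilon> * (2 * t)" using n2 e0 by (rule mult_left_mono)
    finally have B2: "\<bar>(G y2 - G a - H *v (y2 - a)) $ i\<bar> \<le> \<epsilon> * (2 * t)"
      by (rule order_trans[OF component_le_norm_cart])
    have "H *v (y1 - y2) = H *v ((y1 - a) - (y2 - a))" by simp
    also have "\<dots> = H *v (y1 - a) - H *v (y2 - a)" by (rule matrix_vector_mult_diff_distrib)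
    finally have "(H *v (y1 - a)) $ i - (H *v (y2 - a)) $ i = (H *v (y1 - y2)) $ i"
      by simp
    also have "\<dots> = t * H $ i $ j" unfolding d12 by (rule mult_axis_component)
    finally have "G y1 $ i - G y2 $ i - t * H $ i $ j
       = (G y1 - G a - H *v (y1 - a)) $ i - (G y2 - G a - H *v (y2 - a)) $ i" by simp
    then show "\<bar>G (c1 + s *\<^sub>R axis i 1) $ i - G (a + s *\<^sub>R axis i 1) $ i - t * H $ i $ j\<bar> \<le> 4 * \<epsilon> * t"
      using B1 B2 unfolding y1_def y2_def by linarith
  qed
  moreover have "?\<phi> 0 = F c1 - F a" by simp
  moreover have "?\<phi> t = F (a + t *\<^sub>R axis j 1 + t *\<^sub>R axis i 1) - F (a + t *\<^sub>R axis i 1) - t * t * H $ i $ j"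
    by (simp add: c1_def)
  ultimately show ?thesis using t by (simp add: c1_def)
qed


lemma hessian_symmetric:
  fixes F :: "real^'n \<Rightarrow> real" and G :: "real^'n \<Rightarrow> real^'n" and H :: "real^'n^'n"
  assumes U: "open U" and a: "a \<in> U"
    and dF: "\<And>y. y \<in> U \<Longrightarrow> (F has_derivative (\<lambda>h. G y \<bullet> h)) (at y)"
    and dG: "(G has_derivative (\<lambda>h. H *v h)) (at a)"
  shows "transpose H = H"
proof -
  have "H $ i $ j = H $ j $ i" for i j
  proof (rule ccontr)
    assume ne: "H $ i $ j \<noteq> H $ j $ i"
    define \<epsilon> where "\<epsilon> = \<bar>H $ i $ j - H $ j $ i\<bar> / 16"
    have \<epsilon>: "\<epsilon> > 0" using ne by (simp add: \<epsilon>_def)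
    obtain d1 where d1: "d1 > 0" "\<And>y. norm (y - a) < d1 \<Longrightarrow> norm (G y - G a - H *v (y - a)) \<le> \<epsilon> * norm (y - a)"
      using dG \<epsilon> unfolding has_derivative_at_alt by blast
    obtain d2 where d2: "d2 > 0" "ball a d2 \<subseteq> U" using U a open_contains_ball by blast
    define \<delta> where "\<delta> = min d1 d2"
    have dF': "\<And>y. y \<in> ball a \<delta> \<Longrightarrow> (F has_derivative (\<lambda>h. G y \<bullet> h)) (at y)"
      using dF d2 by (auto simp: \<delta>_def)
    have b: "\<And>y. y \<in> ball a \<delta> \<Longrightarrow> norm (G y - G a - H *v (y - a)) \<le> \<epsilon> * norm (y - a)"
      using d1 by (auto simp: \<delta>_def dist_norm norm_minus_commute)
    define t where "t = \<delta> / 4"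
    have t: "0 < t" "2 * t < \<delta>" using d1 d2 by (auto simp: t_def \<delta>_def)
    have eq: "a + t *\<^sub>R axis i 1 + t *\<^sub>R axis j 1 = a + t *\<^sub>R axis j 1 + t *\<^sub>R axis i 1"
      by (simp add: algebra_simps)
    have "\<bar>(F (a + t *\<^sub>R axis j 1 + t *\<^sub>R axis i 1) - F (a + t *\<^sub>R axis i 1))
            - (F (a + t *\<^sub>R axis j 1) - F a) - t * t * H $ i $ j\<bar> \<le> (4 * \<epsilon> * t) * t"
      and "\<bar>(F (a + t *\<^sub>R axis i 1 + t *\<^sub>R axis j 1) - F (a + t *\<^sub>R axis j 1))
            - (F (a + t *\<^sub>R axis i 1) - F a) - t * t * H $ j $ i\<bar> \<le> (4 * \<epsilon> * t) * t"
      using second_difference_estimate[OF dF' b _ t] \<epsilon> by auto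
    then have "\<bar>t * t * H $ i $ j - t * t * H $ j $ i\<bar> \<le> 8 * \<epsilon> * t * t"
      unfolding eq by linarith
    moreover have "t * t * H $ i $ j - t * t * H $ j $ i = (t * t) * (H $ i $ j - H $ j $ i)"
      by (simp add: right_diff_distrib)
    ultimately have "(t * t) * \<bar>H $ i $ j - H $ j $ i\<bar> \<le> (t * t) * (8 * \<epsilon>)"
      by (simp add: abs_mult mult.commute mult.left_commute)
    then have "\<bar>H $ i $ j - H $ j $ i\<bar> \<le> 8 * \<epsilon>"
      using t by (simp add: mult_le_cancel_left_pos)
    then show False
      using \<epsilon> by (simp add: \<epsilon>_def)
  qed
  then show ?thesis
    by (simp add: vec_eq_iff transpose_def)
qed


section \<open>Symmetric matrices and orthogonal projections\<close>

lemma subspace_matrix_kernel: "subspace {v. (A::real^'n^'m) *v v = 0}"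
  unfolding subspace_def by (simp add: matrix_vector_right_distrib matrix_vector_mult_scaleR)

lemma inner_symmetric_matrix:
  fixes H :: "real^'n^'n"
  assumes "transpose H = H"
  shows "x \<bullet> (H *v y) = (H *v x) \<bullet> y"
proof -
  have "x \<bullet> (H *v y) = (x v* H) \<bullet> y"
    by (simp add: dot_lmul_matrix)
  also have "x v* H = transpose H *v x"
    by simp
  finally show ?thesis
    using assms by simp
qed

lemma symmetric_matrix_range_orthogonal_kernel:
  fixes H :: "real^'n^'n"
  assumes "transpose H = H"
  shows "H *v y \<in> orthogonal_comp {v. H *v v = 0}"
  unfolding orthogonal_comp_def orthogonal_def
  using inner_symmetric_matrix[OF assms] by simp

lemma symmetric_matrix_cube_nonzero:
  fixes H :: "real^'n^'n"
  assumes s: "transpose H = H" and nz: "H \<noteq> 0"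
  shows "\<exists>v. (H *v v) \<bullet> (H *v (H *v v)) \<noteq> 0"
proof (rule ccontr)
  assume "\<not> ?thesis"
  then have z: "\<And>v. (H *v v) \<bullet> (H *v (H *v v)) = 0" by blast
  have B: "(H *v a) \<bullet> (H *v (H *v b)) = 0" for a b
  proof -
    have "0 = (H *v (a + b)) \<bullet> (H *v (H *v (a + b)))" using z by simp
    also have "\<dots> = (H *v a) \<bullet> (H *v (H *v a)) + (H *v a) \<bullet> (H *v (H *v b))
                   + (H *v b) \<bullet> (H *v (H *v a)) + (H *v b) \<bullet> (H *v (H *v b))"
      by (simp add: matrix_vector_right_distrib inner_add_left inner_add_right)
    also have "(H *v b) \<bullet> (H *v (H *v a)) = (H *v a) \<bullet> (H *v (H *v b))"
      using inner_symmetric_matrix[OF s, of "H *v b" "H *v a"] inner_symmetric_matrix[OF s, of "H *v a" "H *v b"]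
      by (simp add: inner_commute)
    finally show ?thesis using z by simp
  qed
  have H2: "H *v (H *v b) = 0" for b
    using B[of "H *v b" b] inner_symmetric_matrix[OF s, of "H *v b" "H *v (H *v b)"] by simp
  have H1: "H *v b = 0" for b
  proof -
    have "(H *v b) \<bullet> (H *v b) = b \<bullet> (H *v (H *v b))" using inner_symmetric_matrix[OF s, of b "H *v b"] by simp
    then show ?thesis using H2 by simp
  qed
  then have "H = 0" by (metis matrix_eq matrix_vector_mult_0)
  then show False using nz by simp
qed

lemma orthogonal_projection_exists:
  fixes K :: "'a::euclidean_space set"
  assumes K: "subspace K"
  obtains p where "linear p" "\<And>x. p x \<in> K" "\<And>x. x - p x \<in> orthogonal_comp K"
proof -
  have "\<exists>k. k \<in> K \<and> x - k \<in> orthogonal_comp K" for x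
  proof -
    have "x \<in> K + orthogonal_comp K"
      using subspace_sum_orthogonal_comp[OF K] by blast
    then obtain k w where "x = k + w" "k \<in> K" "w \<in> orthogonal_comp K"
      by (rule set_plus_elim)
    then show ?thesis by auto
  qed
  then have "\<exists>p. \<forall>x. p x \<in> K \<and> x - p x \<in> orthogonal_comp K"
    by (intro choice allI)
  then obtain p where pK: "\<And>x. p x \<in> K" and pperp: "\<And>x. x - p x \<in> orthogonal_comp K"
    by blast
  have Kperp: "subspace (orthogonal_comp K)"
    by (rule subspace_orthogonal_comp)
  have unique: "p x = k" if "k \<in> K" "x - k \<in> orthogonal_comp K" for x k
  proof -
    have "p x - k \<in> K"
      using K pK that(1) by (simp add: subspace_diff)
    moreover have "p x - k \<in> orthogonal_comp K"
      using subspace_diff[OF Kperp that(2) pperp[of x]] by simp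
    ultimately have "p x - k = 0"
      using orthogonal_Int_0[OF K] by blast
    then show ?thesis
      by simp
  qed
  have "linear p"
  proof (rule linearI)
    fix x y :: 'a and c :: real
    have "(x + y) - (p x + p y) \<in> orthogonal_comp K"
      using subspace_add[OF Kperp pperp[of x] pperp[of y]] by (simp add: algebra_simps)
    then show "p (x + y) = p x + p y"
      using K pK by (intro unique) (auto simp: subspace_add)
    have "c *\<^sub>R x - c *\<^sub>R p x \<in> orthogonal_comp K"
      using subspace_scale[OF Kperp pperp[of x], of c] by (simp add: scaleR_diff_right)
    then show "p (c *\<^sub>R x) = c *\<^sub>R p x"
      using K pK by (intro unique) (auto simp: subspace_scale)
  qed
  then show thesis
    using that pK pperp by blast
qed

lemma orthogonal_projection_fixes:
  assumes "subspace K" "\<And>x. p x \<in> K" "\<And>x. x - p x \<in> orthogonal_comp K" "k \<in> K"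
  shows "p k = k"
proof -
  have "k - p k \<in> K \<inter> orthogonal_comp K"
    using assms by (simp add: subspace_diff)
  then have "k - p k = 0"
    using orthogonal_Int_0[OF assms(1)] by blast
  then show ?thesis
    by simp
qed

lemma norm_orthogonal_projection_le:
  assumes "\<And>x. p x \<in> K" "\<And>x. x - p x \<in> orthogonal_comp K"
  shows "norm (p z) \<le> norm z"
proof -
  have "orthogonal (p z) (z - p z)"
    using assms unfolding orthogonal_comp_def by blast
  then have "(norm z)\<^sup>2 = (norm (p z))\<^sup>2 + (norm (z - p z))\<^sup>2"
    using norm_add_Pythagorean[of "p z" "z - p z"] by simp
  then have "(norm (p z))\<^sup>2 \<le> (norm z)\<^sup>2"
    by simp
  then show ?thesis
    by (rule power2_le_imp_le) simp
qed

section \<open>The level set equation at points of class C^2\<close>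

lemma tendsto_matrix_vector_mult:
  fixes A :: "'a \<Rightarrow> real^'n^'m"
  assumes "(A \<longlongrightarrow> A0) F" "(x \<longlongrightarrow> x0) F"
  shows "((\<lambda>t. A t *v x t) \<longlongrightarrow> A0 *v x0) F"
proof -
  have "((\<lambda>t. \<chi> i. \<Sum>j\<in>UNIV. A t $ i $ j * x t $ j) \<longlongrightarrow> (\<chi> i. \<Sum>j\<in>UNIV. A0 $ i $ j * x0 $ j)) F"
  proof (rule tendsto_vec_lambda)
    fix i
    show "((\<lambda>t. \<Sum>j\<in>UNIV. A t $ i $ j * x t $ j) \<longlongrightarrow> (\<Sum>j\<in>UNIV. A0 $ i $ j * x0 $ j)) F"
    proof (rule tendsto_sum)
      fix j
      have "((\<lambda>t. A t $ i) \<longlongrightarrow> A0 $ i) F" by (rule tendsto_vec_nth[OF assms(1)])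
      then have a: "((\<lambda>t. A t $ i $ j) \<longlongrightarrow> A0 $ i $ j) F" by (rule tendsto_vec_nth)
      have b: "((\<lambda>t. x t $ j) \<longlongrightarrow> x0 $ j) F" by (rule tendsto_vec_nth[OF assms(2)])
      show "((\<lambda>t. A t $ i $ j * x t $ j) \<longlongrightarrow> A0 $ i $ j * x0 $ j) F" by (rule tendsto_mult[OF a b])
    qed
  qed
  then show ?thesis unfolding matrix_vector_mult_def .
qed

lemma tendsto_trace:
  fixes A :: "'a \<Rightarrow> real^'n^'n"
  assumes "(A \<longlongrightarrow> A0) F"
  shows "((\<lambda>t. trace (A t)) \<longlongrightarrow> trace A0) F"
  unfolding trace_def
  by (intro tendsto_sum tendsto_vec_nth assms)

lemma continuous_on_matrix_vector_mult:
  fixes A :: "'a::topological_space \<Rightarrow> real^'n^'m"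
  assumes "continuous_on S A" "continuous_on S x"
  shows "continuous_on S (\<lambda>z. A z *v x z)"
  using assms unfolding continuous_on_def by (auto intro: tendsto_matrix_vector_mult)

lemma abs_inner_matrix_vector_le:
  fixes A :: "real^'n^'n"
  shows "\<bar>q \<bullet> (A *v q)\<bar> \<le> (\<Sum>i\<in>UNIV. \<Sum>j\<in>UNIV. \<bar>A $ i $ j\<bar>) * (norm q)\<^sup>2"
proof -
  have "\<bar>q \<bullet> (A *v q)\<bar> \<le> norm q * norm (A *v q)"
    by (rule Cauchy_Schwarz_ineq2)
  also have "norm (A *v q) \<le> onorm ((*v) A) * norm q"
    by (rule onorm[OF matrix_vector_mul_bounded_linear])
  also have "onorm ((*v) A) \<le> (\<Sum>i\<in>UNIV. \<Sum>j\<in>UNIV. \<bar>A $ i $ j\<bar>)"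
    by (rule onorm_le_matrix_component_sum)
  finally show ?thesis
    by (simp add: power2_eq_square mult_left_mono mult_right_mono algebra_simps)
qed

lemma Ck_on_subset: "Ck_on k S f \<Longrightarrow> T \<subseteq> S \<Longrightarrow> Ck_on k T f"
proof -
  assume "Ck_on k S f" "T \<subseteq> S"
  then obtain P where "\<forall>x\<in>S. P [] x = f x"
    "\<forall>is i x. length is < k \<and> x \<in> S \<longrightarrow> ((\<lambda>t. P is (x + t *\<^sub>R axis i 1)) has_real_derivative P (i # is) x) (at 0)"
    "\<forall>is. length is \<le> k \<longrightarrow> continuous_on S (P is)"
    unfolding Ck_on_def by blast
  with \<open>T \<subseteq> S\<close> show ?thesis unfolding Ck_on_def
    by (intro exI[of _ P]) (auto intro: continuous_on_subset)
qed

lemma viscosity_solution_C2_equation: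
  fixes u :: "real^'n \<Rightarrow> real"
  assumes "viscosity_subsol U u" "viscosity_supersol U u" "Ck_on 2 U u" "open U"
    and "y \<in> U" "grad u y \<noteq> 0"
  shows "trace (hess u y) - (grad u y \<bullet> (hess u y *v grad u y)) / (norm (grad u y))\<^sup>2 + 1 = 0"
proof -
  obtain r where r: "r > 0" "ball y r \<subseteq> U"
    using assms(4,5) open_contains_ball by blast
  have "Ck_on 2 (ball y r) u"
    using Ck_on_subset[OF assms(3) r(2)] .
  \<comment> \<open>u is its own test function, touching itself from above and from below\<close>
  then show ?thesis
    using assms(1,2,5,6) r
    unfolding viscosity_subsol_def viscosity_supersol_def Let_def
    by (smt (verit) order_refl)
qed

lemma viscosity_supersol_C2_hess_nonzero:
  fixes u :: "real^'n \<Rightarrow> real"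
  assumes "viscosity_supersol U u" "Ck_on 2 U u" "open U" "y \<in> U" "grad u y = 0"
  shows "hess u y \<noteq> 0"
proof
  assume hess0: "hess u y = 0"
  obtain r where r: "r > 0" "ball y r \<subseteq> U"
    using assms(3,4) open_contains_ball by blast
  have "Ck_on 2 (ball y r) u"
    using Ck_on_subset[OF assms(2) r(2)] .
  then have "\<exists>e. norm e = 1 \<and> trace (hess u y) - e \<bullet> (hess u y *v e) + 1 \<le> 0"
    using assms(1)[unfolded viscosity_supersol_def, rule_format, of y r u] assms(4,5) r
    unfolding Let_def by auto
  then show False
    using hess0 by (auto simp: trace_def)
qed

lemma tendsto_difference_quotient_along_ray:
  fixes G :: "real^'n \<Rightarrow> real^'m" and H :: "real^'n^'m"
  assumes "(G has_derivative (\<lambda>h. H *v h)) (at a)"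
  shows "((\<lambda>t. (1/t) *\<^sub>R (G (a + t *\<^sub>R v) - G a)) \<longlongrightarrow> H *v v) (at 0)"
proof -
  define f where "f t = G (a + t *\<^sub>R v)" for t :: real
  have "((\<lambda>t. a + t *\<^sub>R v) has_derivative (\<lambda>t. t *\<^sub>R v)) (at 0)"
    by (auto intro!: derivative_eq_intros)
  moreover have "(G has_derivative (\<lambda>h. H *v h)) (at (a + 0 *\<^sub>R v))"
    using assms by simp
  ultimately have "(f has_derivative (\<lambda>t. H *v (t *\<^sub>R v))) (at 0)"
    unfolding f_def by (rule has_derivative_compose)
  then have "(f has_derivative (\<lambda>t. t *\<^sub>R (H *v v))) (at 0)"
    by (simp add: matrix_vector_mult_scaleR)
  then have lim: "((\<lambda>t. norm (f (0 + t) - f 0 - t *\<^sub>R (H *v v)) / norm t) \<longlongrightarrow> 0) (at 0)"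
    unfolding has_derivative_at by blast
  have "norm (f (0 + t) - f 0 - t *\<^sub>R (H *v v)) / norm t
                   = norm ((1/t) *\<^sub>R (f t - f 0) - H *v v)" if "t \<noteq> 0" for t
  proof -
    have "(1/t) *\<^sub>R (f t - f 0) - H *v v = (1/t) *\<^sub>R (f t - f 0 - t *\<^sub>R (H *v v))"
      using that by (simp add: algebra_simps)
    then show ?thesis
      by (simp add: divide_inverse mult.commute)
  qed
  then have ev: "\<forall>\<^sub>F t in at 0. norm (f (0 + t) - f 0 - t *\<^sub>R (H *v v)) / norm t
                     = norm ((1/t) *\<^sub>R (f t - f 0) - H *v v)"
    by (auto simp: eventually_at_filter)
  from lim have "((\<lambda>t. norm ((1/t) *\<^sub>R (f t - f 0) - H *v v)) \<longlongrightarrow> 0) (at 0)"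
    unfolding tendsto_cong[OF ev] .
  then show ?thesis
    unfolding f_def by (simp add: tendsto_norm_zero_iff LIM_zero_iff)
qed

lemma rayleigh_quotient_scaleR:
  fixes X :: "real^'n^'n"
  assumes "t \<noteq> 0"
  shows "((t *\<^sub>R q) \<bullet> (X *v (t *\<^sub>R q))) / (norm (t *\<^sub>R q))\<^sup>2 = (q \<bullet> (X *v q)) / (norm q)\<^sup>2"
proof -
  have "((t *\<^sub>R q) \<bullet> (X *v (t *\<^sub>R q))) = (t * t) * (q \<bullet> (X *v q))"
    by (simp add: matrix_vector_mult_scaleR)
  moreover have "(norm (t *\<^sub>R q))\<^sup>2 = (t * t) * (norm q)\<^sup>2"
    by (simp add: power2_eq_square)
  ultimately show ?thesis
    using assms by simp
qed

lemma trace_hess_plus_one_nonzero: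
  fixes u :: "real^'n \<Rightarrow> real"
  assumes sub: "viscosity_subsol U u" and super: "viscosity_supersol U u"
    and C2: "Ck_on 2 U u" and U: "open U" and a: "a \<in> U" and crit: "grad u a = 0"
  shows "trace (hess u a) + 1 \<noteq> 0"
proof -
  define H where "H = hess u a"
  have "transpose H = H"
    unfolding H_def
    using hessian_symmetric[OF U a grad_has_derivative[OF C2 U] hess_has_derivative[OF C2 U a]] .
  moreover have "H \<noteq> 0"
    unfolding H_def by (rule viscosity_supersol_C2_hess_nonzero[OF super C2 U a crit])
  ultimately obtain v where cube: "(H *v v) \<bullet> (H *v (H *v v)) \<noteq> 0"
    using symmetric_matrix_cube_nonzero by blast
  define w where "w = H *v v"
  have "w \<noteq> 0"
    using cube by (auto simp: w_def)
  \<comment> \<open>Along the ray a + t v the rescaled gradient tends to w, which is not a null direction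
    of H; passing to the limit in the equation at the regular points a + t v gives the claim.\<close>
  define q where "q t = (1/t) *\<^sub>R grad u (a + t *\<^sub>R v)" for t
  have q_lim: "(q \<longlongrightarrow> w) (at 0)"
    using tendsto_difference_quotient_along_ray[OF hess_has_derivative[OF C2 U a], of v] crit
    by (simp add: q_def[abs_def] w_def H_def)
  have "((\<lambda>t. a + t *\<^sub>R v) \<longlongrightarrow> a + 0 *\<^sub>R v) (at 0)"
    by (intro tendsto_intros)
  then have ray_lim: "((\<lambda>t. a + t *\<^sub>R v) \<longlongrightarrow> a) (at 0)"
    by simp
  have "isCont (hess u) a"
    using continuous_on_hess[OF C2 U] U a continuous_on_eq_continuous_at by blast
  then have hess_lim: "((\<lambda>t. hess u (a + t *\<^sub>R v)) \<longlongrightarrow> H) (at 0)"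
    unfolding H_def using isCont_tendsto_compose ray_lim by blast
  define E where "E t = trace (hess u (a + t *\<^sub>R v))
                         - (q t \<bullet> (hess u (a + t *\<^sub>R v) *v q t)) / (norm (q t))\<^sup>2" for t
  have "(E \<longlongrightarrow> trace H - (w \<bullet> (H *v w)) / (norm w)\<^sup>2) (at 0)"
    unfolding E_def using \<open>w \<noteq> 0\<close>
    by (intro tendsto_diff tendsto_trace hess_lim tendsto_divide tendsto_inner q_lim
        tendsto_matrix_vector_mult tendsto_power tendsto_norm) simp_all
  moreover have "\<forall>\<^sub>F t in at 0. E t = -1"
  proof -
    have "\<forall>\<^sub>F t in at 0. q t \<noteq> 0"
      using tendsto_imp_eventually_ne[OF q_lim \<open>w \<noteq> 0\<close>] .
    moreover have "\<forall>\<^sub>F t in at 0. a + t *\<^sub>R v \<in> U"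
      using ray_lim U a unfolding tendsto_def by blast
    moreover have "\<forall>\<^sub>F t in at (0::real). t \<noteq> 0"
      by (simp add: eventually_at_filter)
    ultimately show ?thesis
    proof eventually_elim
      case (elim t)
      then have g: "grad u (a + t *\<^sub>R v) = t *\<^sub>R q t"
        by (simp add: q_def)
      have "grad u (a + t *\<^sub>R v) \<noteq> 0"
        using elim g by simp
      from viscosity_solution_C2_equation[OF sub super C2 U elim(2) this]
      show "E t = -1"
        unfolding E_def g rayleigh_quotient_scaleR[OF elim(3)] by simp
    qed
  qed
  then have "(E \<longlongrightarrow> -1) (at 0)"
    by (rule tendsto_eventually)
  ultimately have "trace H - (w \<bullet> (H *v w)) / (norm w)\<^sup>2 = -1"
    using tendsto_unique[OF at_neq_bot] by blast
  moreover have "(w \<bullet> (H *v w)) / (norm w)\<^sup>2 \<noteq> 0"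
    using cube \<open>w \<noteq> 0\<close> by (simp add: w_def)
  ultimately show ?thesis
    unfolding H_def by linarith
qed


lemma critical_near_if_gradient_in_kernel:
  fixes u :: "real^'n \<Rightarrow> real"
  assumes sub: "viscosity_subsol U u" and super: "viscosity_supersol U u"
    and C2: "Ck_on 2 U u" and U: "open U" and a: "a \<in> U" and crit: "grad u a = 0"
  obtains \<delta> where "\<delta> > 0" "ball a \<delta> \<subseteq> U"
    "\<And>y. y \<in> ball a \<delta> \<Longrightarrow> hess u a *v grad u y = 0 \<Longrightarrow> grad u y = 0"
proof -
  define H where "H = hess u a"
  define \<eta> where "\<eta> = \<bar>trace H + 1\<bar>"
  have "\<eta> > 0"
    using trace_hess_plus_one_nonzero[OF sub super C2 U a crit] by (simp add: \<eta>_def H_def)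
  have "isCont (hess u) a"
    using continuous_on_hess[OF C2 U] U a continuous_on_eq_continuous_at by blast
  then have hess_lim: "(hess u \<longlongrightarrow> H) (at a)"
    unfolding H_def isCont_def .
  have "((\<lambda>y. \<Sum>i\<in>UNIV. \<Sum>j\<in>UNIV. \<bar>(hess u y - H) $ i $ j\<bar>) \<longlongrightarrow> (\<Sum>i\<in>UNIV. \<Sum>j\<in>UNIV. \<bar>(H - H) $ i $ j\<bar>)) (at a)"
    by (intro tendsto_sum tendsto_rabs tendsto_vec_nth tendsto_diff hess_lim tendsto_const)
  from order_tendstoD(2)[OF this, of "\<eta> / 2"]
  have "\<forall>\<^sub>F y in at a. (\<Sum>i\<in>UNIV. \<Sum>j\<in>UNIV. \<bar>(hess u y - H) $ i $ j\<bar>) < \<eta> / 2"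
    using \<open>\<eta> > 0\<close> by simp
  moreover have "\<forall>\<^sub>F y in at a. \<bar>trace (hess u y) - trace H\<bar> < \<eta> / 2"
    using tendsto_trace[OF hess_lim] \<open>\<eta> > 0\<close> unfolding tendsto_iff dist_real_def
    by (meson half_gt_zero)
  ultimately have "\<forall>\<^sub>F y in at a. (\<Sum>i\<in>UNIV. \<Sum>j\<in>UNIV. \<bar>(hess u y - H) $ i $ j\<bar>) < \<eta> / 2
                      \<and> \<bar>trace (hess u y) - trace H\<bar> < \<eta> / 2"
    by (rule eventually_conj)
  then obtain d where d: "d > 0"
    "\<And>y. y \<noteq> a \<Longrightarrow> dist y a < d \<Longrightarrow>
       (\<Sum>i\<in>UNIV. \<Sum>j\<in>UNIV. \<bar>(hess u y - H) $ i $ j\<bar>) < \<eta> / 2 \<and> \<bar>trace (hess u y) - trace H\<bar> < \<eta> / 2"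
    unfolding eventually_at by blast
  obtain r where r: "r > 0" "ball a r \<subseteq> U"
    using U a open_contains_ball by blast
  show thesis
  proof
    show "min d r > 0" "ball a (min d r) \<subseteq> U"
      using d r by auto
    fix y assume y: "y \<in> ball a (min d r)" and ker: "hess u a *v grad u y = 0"
    show "grad u y = 0"
    proof (rule ccontr)
      define q where "q = grad u y"
      assume "grad u y \<noteq> 0"
      then have "q \<noteq> 0" "y \<noteq> a"
        using crit by (auto simp: q_def)
      then have close: "(\<Sum>i\<in>UNIV. \<Sum>j\<in>UNIV. \<bar>(hess u y - H) $ i $ j\<bar>) < \<eta> / 2"
          "\<bar>trace (hess u y) - trace H\<bar> < \<eta> / 2"
        using d(2) y by (auto simp: dist_commute)
      have "trace (hess u y) - (q \<bullet> (hess u y *v q)) / (norm q)\<^sup>2 + 1 = 0"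
        unfolding q_def using viscosity_solution_C2_equation[OF sub super C2 U] y r \<open>grad u y \<noteq> 0\<close> by auto
      \<comment> \<open>since H q = 0, the Rayleigh quotient of hess u y at q only sees hess u y - H\<close>
      moreover have "q \<bullet> (hess u y *v q) = q \<bullet> ((hess u y - H) *v q)"
        using ker by (simp add: q_def H_def matrix_vector_mult_diff_rdistrib)
      then have "\<bar>(q \<bullet> (hess u y *v q)) / (norm q)\<^sup>2\<bar> \<le> (\<Sum>i\<in>UNIV. \<Sum>j\<in>UNIV. \<bar>(hess u y - H) $ i $ j\<bar>)"
        using abs_inner_matrix_vector_le[of q "hess u y - H"] \<open>q \<noteq> 0\<close>
        by (simp add: abs_div pos_divide_le_eq)
      ultimately show False
        using close \<eta>_def by linarith
    qed
  qed
qed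

section \<open>Inverse function theorem with continuous derivative\<close>

lemma norm_inverse_blinfun_diff_le:
  fixes A A0 B B0 :: "'a::real_normed_vector \<Rightarrow>\<^sub>L 'a"
  assumes inv0: "\<And>x. B0 (A0 x) = x" "\<And>x. A0 (B0 x) = x"
    and inv: "\<And>x. B (A x) = x" "\<And>x. A (B x) = x"
    and small: "norm (A - A0) < 1 / (2 * (norm B0 + 1))"
  shows "norm (B - B0) \<le> 2 * (norm B0 + 1) * (norm B0 + 1) * norm (A - A0)"
proof -
  define c where "c = norm B0 + 1"
  have c: "c > 0" by (simp add: c_def add_nonneg_pos)
  have y: "norm (A - A0) < 1 / (2 * c)" using small by (simp add: c_def)
  have lb: "norm z \<le> c * norm (A0 z)" for z
  proof -
    have "norm z = norm (B0 (A0 z))" by (simp add: inv0)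
    also have "\<dots> \<le> norm B0 * norm (A0 z)" by (rule norm_blinfun)
    also have "\<dots> \<le> c * norm (A0 z)" by (rule mult_right_mono) (auto simp: c_def)
    finally show ?thesis .
  qed
  have B_le: "norm (B x) \<le> 2 * c * norm x" for x
  proof -
    define z where "z = B x"
    have xz: "x = A z" by (simp add: z_def inv)
    have "A0 z = A z - (A - A0) z" by (simp add: blinfun.diff_left)
    then have "norm (A0 z) \<le> norm (A z) + norm ((A - A0) z)" by (metis norm_triangle_ineq4)
    also have "norm ((A - A0) z) \<le> norm (A - A0) * norm z" by (rule norm_blinfun)
    also have "\<dots> \<le> (1 / (2 * c)) * norm z" using y by (intro mult_right_mono) auto
    finally have "norm (A0 z) \<le> norm x + (1 / (2 * c)) * norm z" by (simp add: xz)
    then have "c * norm (A0 z) \<le> c * (norm x + (1 / (2 * c)) * norm z)" using c by (intro mult_left_mono) auto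
    also have "\<dots> = c * norm x + norm z / 2" using c by (simp add: field_simps)
    finally have "c * norm (A0 z) \<le> c * norm x + norm z / 2" .
    with lb[of z] have "norm z \<le> c * norm x + norm z / 2" by linarith
    then show ?thesis by (simp add: z_def)
  qed
  have "norm (B - B0) \<le> 2 * c * c * norm (A - A0)"
  proof (rule norm_blinfun_bound)
    show "0 \<le> 2 * c * c * norm (A - A0)" using c by simp
    fix x
    have "(B - B0) x = B ((A0 - A) (B0 x))"
      by (simp add: blinfun.diff_left blinfun.diff_right inv inv0)
    then have "norm ((B - B0) x) \<le> 2 * c * norm ((A0 - A) (B0 x))" using B_le by simp
    also have "\<dots> \<le> 2 * c * (norm (A0 - A) * norm (B0 x))"
      using c by (intro mult_left_mono norm_blinfun) auto
    also have "\<dots> \<le> 2 * c * (norm (A0 - A) * (c * norm x))"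
    proof -
      have "norm (B0 x) \<le> norm B0 * norm x" by (rule norm_blinfun)
      also have "\<dots> \<le> c * norm x" by (rule mult_right_mono) (auto simp: c_def)
      finally show ?thesis using c by (intro mult_left_mono) auto
    qed
    also have "\<dots> = 2 * c * c * norm (A - A0) * norm x" by (simp add: norm_minus_commute)
    finally show "norm ((B - B0) x) \<le> 2 * c * c * norm (A - A0) * norm x" .
  qed
  then show ?thesis by (simp add: c_def)
qed

lemma tendsto_inverse_blinfun:
  fixes A B :: "'c \<Rightarrow> ('a::real_normed_vector \<Rightarrow>\<^sub>L 'a)" and A0 B0 :: "'a \<Rightarrow>\<^sub>L 'a"
  assumes A: "(A \<longlongrightarrow> A0) F"
    and inv: "\<forall>\<^sub>F y in F. \<forall>x. B y (A y x) = x \<and> A y (B y x) = x"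
    and inv0: "\<And>x. B0 (A0 x) = x" "\<And>x. A0 (B0 x) = x"
  shows "(B \<longlongrightarrow> B0) F"
proof -
  define C where "C = 2 * (norm B0 + 1) * (norm B0 + 1)"
  have "1 / (2 * (norm B0 + 1)) > 0"
    by (simp add: add_nonneg_pos)
  with A have "\<forall>\<^sub>F y in F. norm (A y - A0) < 1 / (2 * (norm B0 + 1))"
    unfolding tendsto_iff dist_norm by blast
  with inv have "\<forall>\<^sub>F y in F. norm (B y - B0) \<le> C * norm (A y - A0)"
    unfolding C_def
  proof eventually_elim
    case (elim y)
    then show ?case
      by (intro norm_inverse_blinfun_diff_le[OF inv0]) auto
  qed
  moreover have "((\<lambda>y. C * norm (A y - A0)) \<longlongrightarrow> 0) F"
    using tendsto_mult_right_zero[OF tendsto_norm_zero[OF Lim_null[THEN iffD1, OF A]]] .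
  ultimately have "((\<lambda>y. B y - B0) \<longlongrightarrow> 0) F"
    by (rule Lim_null_comparison)
  then show ?thesis
    by (simp add: Lim_null[symmetric])
qed


lemma inverse_function_theorem_C1:
  fixes f :: "'a::euclidean_space \<Rightarrow> 'a" and f' :: "'a \<Rightarrow> ('a \<Rightarrow>\<^sub>L 'a)"
  assumes U: "open U"
    and df: "\<And>x. x \<in> U \<Longrightarrow> (f has_derivative blinfun_apply (f' x)) (at x)"
    and cf': "continuous_on U f'" and x0: "x0 \<in> U" and L: "L o\<^sub>L f' x0 = id_blinfun"
  obtains U' V g g' where "open U'" "U' \<subseteq> U" "x0 \<in> U'" "open V" "f x0 \<in> V"
    "homeomorphism U' V f g"
    "\<And>y. y \<in> V \<Longrightarrow> (g has_derivative blinfun_apply (g' y)) (at y)"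
    "continuous_on V g'"
    "\<And>y x. y \<in> V \<Longrightarrow> g' y (f' (g y) x) = x"
proof -
  obtain U' V g g' where IFT: "open U'" "U' \<subseteq> U" "x0 \<in> U'" "open V" "f x0 \<in> V"
      "homeomorphism U' V f g"
      and dg: "\<And>y. y \<in> V \<Longrightarrow> (g has_derivative (g' y)) (at y)"
      and g'_eq: "\<And>y. y \<in> V \<Longrightarrow> g' y = inv (blinfun_apply (f' (g y)))"
      and bij: "\<And>y. y \<in> V \<Longrightarrow> bij (blinfun_apply (f' (g y)))"
    using inverse_function_theorem[OF U df cf' x0 L] by blast
  have hom: "g ` V = U'" "continuous_on V g"
    using IFT(6) unfolding homeomorphism_def by auto
  define B where "B y = Blinfun (g' y)" for y
  have B_apply: "blinfun_apply (B y) = g' y" if "y \<in> V" for y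
    unfolding B_def using dg[OF that] has_derivative_bounded_linear bounded_linear_Blinfun_apply by blast
  define A where "A y = f' (g y)" for y
  have inverse: "B y (A y x) = x \<and> A y (B y x) = x" if "y \<in> V" for y x
  proof -
    have "bij (blinfun_apply (A y))"
      using bij[OF that] by (simp add: A_def)
    moreover have "blinfun_apply (B y) = inv (blinfun_apply (A y))"
      using B_apply[OF that] g'_eq[OF that] by (simp add: A_def)
    ultimately show ?thesis
      by (simp add: bij_is_inj bij_is_surj surj_f_inv_f)
  qed
  have "continuous_on V A"
    unfolding A_def by (rule continuous_on_compose2[OF cf' hom(2)]) (use hom(1) IFT(2) in auto)
  have "continuous_on V B"
    unfolding continuous_on_def
  proof
    fix y0 assume y0: "y0 \<in> V"
    have "(A \<longlongrightarrow> A y0) (at y0 within V)"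
      using \<open>continuous_on V A\<close> y0 unfolding continuous_on_def by blast
    moreover have "\<forall>\<^sub>F y in at y0 within V. \<forall>x. B y (A y x) = x \<and> A y (B y x) = x"
      using inverse by (auto simp: eventually_at_filter)
    ultimately show "(B \<longlongrightarrow> B y0) (at y0 within V)"
      by (rule tendsto_inverse_blinfun) (use inverse[OF y0] in auto)
  qed
  show thesis
  proof (rule that[OF IFT])
    show "(g has_derivative blinfun_apply (B y)) (at y)" if "y \<in> V" for y
      using dg[OF that] B_apply[OF that] by simp
    show "B y (f' (g y) x) = x" if "y \<in> V" for y x
      using inverse[OF that] by (simp add: A_def)
  qed fact
qed


section \<open>Graphs over a subspace\<close>

lemma lipschitz_on_subspace_of_derivative_near_identity:
  fixes g :: "'a::euclidean_space \<Rightarrow> 'a" and g' :: "'a \<Rightarrow> 'a \<Rightarrow> 'a"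
  assumes K: "subspace K" and p: "linear p" "\<And>x. p x \<in> K" "\<And>x. x - p x \<in> orthogonal_comp K"
    and dg: "\<And>y. y \<in> K \<Longrightarrow> norm y < \<rho> \<Longrightarrow> (g has_derivative g' y) (at y)"
    and near_id: "\<And>y k. y \<in> K \<Longrightarrow> norm y < \<rho> \<Longrightarrow> k \<in> K \<Longrightarrow> norm (g' y k - k) \<le> c * norm k"
    and "c \<ge> 0" and a: "a \<in> K" "norm a < \<rho>" and b: "b \<in> K" "norm b < \<rho>"
  shows "norm ((g a - a) - (g b - b)) \<le> c * norm (a - b)"
proof -
  have p_ball: "p z \<in> K" "norm (p z) < \<rho>" if "z \<in> ball 0 \<rho>" for z
    using p(2) norm_orthogonal_projection_le[of p K z, OF p(2,3)] that by auto
  have dp: "(p has_derivative p) (at z within S)" for z S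
    using p(1) by (simp add: linear_conv_bounded_linear bounded_linear_imp_has_derivative)
  \<comment> \<open>composing with p restricts the directions to K, where g' is close to the identity\<close>
  have "norm ((g (p a) - p a) - (g (p b) - p b)) \<le> c * norm (a - b)"
  proof (rule differentiable_bound[where S = "ball 0 \<rho>" and f = "\<lambda>z. g (p z) - p z"
        and f' = "\<lambda>z h. g' (p z) (p h) - p h"])
    fix z :: 'a assume z: "z \<in> ball 0 \<rho>"
    show "((\<lambda>z. g (p z) - p z) has_derivative (\<lambda>h. g' (p z) (p h) - p h)) (at z within ball 0 \<rho>)"
      using has_derivative_compose[OF dp dg[OF p_ball[OF z]]] dp by (intro has_derivative_diff)
    show "onorm (\<lambda>h. g' (p z) (p h) - p h) \<le> c"
    proof (rule onorm_le)
      fix h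
      have "norm (g' (p z) (p h) - p h) \<le> c * norm (p h)"
        using near_id[OF p_ball[OF z] p(2)] .
      also have "\<dots> \<le> c * norm h"
        using \<open>c \<ge> 0\<close> norm_orthogonal_projection_le[of p K h, OF p(2,3)] by (rule mult_left_mono[rotated])
      finally show "norm (g' (p z) (p h) - p h) \<le> c * norm h" .
    qed
  qed (use a b in auto)
  then show ?thesis
    using orthogonal_projection_fixes[OF K p(2,3)] a b by simp
qed

lemma sum_squares_along_half_lipschitz_le:
  fixes t a F1 Ft :: real
  assumes t: "0 \<le> t" "t \<le> 1" and a: "0 \<le> a" and F1: "0 \<le> F1" "F1 \<le> a / 2"
    and Ft: "0 \<le> Ft" "Ft \<le> F1 + (1 - t) * a / 2"
  shows "(t * a)\<^sup>2 + Ft\<^sup>2 \<le> a\<^sup>2 + F1\<^sup>2"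
proof -
  define s where "s = 1 - t"
  have s: "0 \<le> s" "s \<le> 1" using t by (auto simp: s_def)
  have "Ft\<^sup>2 \<le> (F1 + s * a / 2)\<^sup>2" using Ft s_def by (intro power_mono) auto
  also have "\<dots> = F1\<^sup>2 + s * a * F1 + s\<^sup>2 * a\<^sup>2 / 4" by (simp add: power2_eq_square algebra_simps)
  also have "s * a * F1 \<le> s * a * (a / 2)" using s a F1 by (intro mult_left_mono) auto
  finally have 1: "Ft\<^sup>2 \<le> F1\<^sup>2 + s * a\<^sup>2 / 2 + s\<^sup>2 * a\<^sup>2 / 4" by (simp add: power2_eq_square algebra_simps)
  have 2: "(t * a)\<^sup>2 = (1 - s)\<^sup>2 * a\<^sup>2" by (simp add: s_def power_mult_distrib)
  have 3: "(1 - s)\<^sup>2 + s / 2 + s\<^sup>2 / 4 \<le> 1"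
  proof -
    have "(1 - s)\<^sup>2 + s / 2 + s\<^sup>2 / 4 = 1 - s * (3/2 - 5 * s / 4)" by (simp add: power2_eq_square algebra_simps)
    moreover have "s * (3/2 - 5 * s / 4) \<ge> 0" using s by (intro mult_nonneg_nonneg) auto
    ultimately show ?thesis by linarith
  qed
  have "(t * a)\<^sup>2 + Ft\<^sup>2 \<le> ((1 - s)\<^sup>2 + s / 2 + s\<^sup>2 / 4) * a\<^sup>2 + F1\<^sup>2"
  proof -
    have "((1 - s)\<^sup>2 + s / 2 + s\<^sup>2 / 4) * a\<^sup>2 + F1\<^sup>2 = (1 - s)\<^sup>2 * a\<^sup>2 + (F1\<^sup>2 + s * a\<^sup>2 / 2 + s\<^sup>2 * a\<^sup>2 / 4)"
      by (simp add: algebra_simps)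
    then show ?thesis using 1 2 by linarith
  qed
  also have "\<dots> \<le> 1 * a\<^sup>2 + F1\<^sup>2" using 3 by (intro add_right_mono mult_right_mono) auto
  finally show ?thesis by simp
qed

lemma starlike_graph_sublevel:
  fixes f :: "'a::euclidean_space \<Rightarrow> 'a"
  assumes K: "subspace K"
    and perp: "\<And>x. x \<in> K \<Longrightarrow> norm x < \<rho> \<Longrightarrow> f x \<in> orthogonal_comp K"
    and f0: "f 0 = 0"
    and lip: "\<And>x y. x \<in> K \<Longrightarrow> norm x < \<rho> \<Longrightarrow> y \<in> K \<Longrightarrow> norm y < \<rho> \<Longrightarrow>
                 norm (f x - f y) \<le> norm (x - y) / 2"
    and "0 < \<rho>" "0 < r"
  shows "starlike {x \<in> K. norm x < \<rho> \<and> norm (x + f x) < r}"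
proof -
  let ?\<Omega> = "{x \<in> K. norm x < \<rho> \<and> norm (x + f x) < r}"
  have pyth: "(norm (x + f x))\<^sup>2 = (norm x)\<^sup>2 + (norm (f x))\<^sup>2" if "x \<in> K" "norm x < \<rho>" for x
  proof -
    have "orthogonal x (f x)"
      using perp[OF that] that(1) unfolding orthogonal_comp_def by blast
    then show ?thesis
      by (rule norm_add_Pythagorean)
  qed
  have "0 \<in> ?\<Omega>"
    using K \<open>0 < \<rho>\<close> \<open>0 < r\<close> f0 by (simp add: subspace_0)
  moreover have "t *\<^sub>R x \<in> ?\<Omega>" if x: "x \<in> ?\<Omega>" and t: "0 \<le> t" "t \<le> 1" for x t
  proof -
    have xK: "x \<in> K" and xr: "norm x < \<rho>" and gx: "norm (x + f x) < r"
      using x by auto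
    have txK: "t *\<^sub>R x \<in> K"
      using K xK by (simp add: subspace_scale)
    have txr: "norm (t *\<^sub>R x) < \<rho>"
      using t xr mult_left_le_one_le[of "norm x" t] by simp
    have F1: "norm (f x) \<le> norm x / 2"
      using lip[OF xK xr, of 0] K f0 \<open>0 < \<rho>\<close> by (simp add: subspace_0)
    have "norm (f (t *\<^sub>R x)) \<le> norm (f x) + norm (f (t *\<^sub>R x) - f x)"
      by (metis norm_triangle_sub add.commute)
    also have "norm (f (t *\<^sub>R x) - f x) \<le> norm (t *\<^sub>R x - x) / 2"
      by (rule lip[OF txK txr xK xr])
    also have "norm (t *\<^sub>R x - x) = (1 - t) * norm x"
    proof -
      have "t *\<^sub>R x - x = - ((1 - t) *\<^sub>R x)" by (simp add: algebra_simps)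
      then show ?thesis using t by simp
    qed
    finally have Ft: "norm (f (t *\<^sub>R x)) \<le> norm (f x) + (1 - t) * norm x / 2"
      by simp
    have "(t * norm x)\<^sup>2 + (norm (f (t *\<^sub>R x)))\<^sup>2 \<le> (norm x)\<^sup>2 + (norm (f x))\<^sup>2"
      by (rule sum_squares_along_half_lipschitz_le[OF t norm_ge_zero norm_ge_zero F1 norm_ge_zero Ft])
    then have "(norm (t *\<^sub>R x + f (t *\<^sub>R x)))\<^sup>2 \<le> (norm (x + f x))\<^sup>2"
      using pyth[OF txK txr] pyth[OF xK xr] t by simp
    then have "norm (t *\<^sub>R x + f (t *\<^sub>R x)) \<le> norm (x + f x)"
      by (rule power2_le_imp_le) simp
    then show ?thesis
      using gx txK txr by simp
  qed
  ultimately show ?thesis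
    unfolding starlike_def by (auto simp: closed_segment_def)
qed


lemma constant_along_critical_family:
  fixes u :: "'a::euclidean_space \<Rightarrow> real" and G g :: "'a \<Rightarrow> 'a"
  assumes K: "subspace K" and p: "linear p" "\<And>x. p x \<in> K" "\<And>x. x - p x \<in> orthogonal_comp K"
    and du: "\<And>x. x \<in> U \<Longrightarrow> (u has_derivative (\<lambda>h. G x \<bullet> h)) (at x)"
    and dg: "\<And>y. y \<in> K \<Longrightarrow> norm y < \<rho> \<Longrightarrow> (g has_derivative g' y) (at y)"
    and crit: "\<And>y. y \<in> K \<Longrightarrow> norm y < \<rho> \<Longrightarrow> g y \<in> U \<and> G (g y) = 0"
  shows "\<exists>c. \<forall>y. y \<in> K \<and> norm y < \<rho> \<longrightarrow> u (g y) = c"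
proof -
  have "\<exists>c. \<forall>z\<in>ball 0 \<rho>. u (g (p z)) = c"
  proof (rule has_derivative_zero_constant)
    fix z :: 'a assume z: "z \<in> ball 0 \<rho>"
    have pz: "p z \<in> K" "norm (p z) < \<rho>"
      using p(2) norm_orthogonal_projection_le[of p K z, OF p(2,3)] z by auto
    have "(p has_derivative p) (at z within ball 0 \<rho>)"
      using p(1) by (simp add: linear_conv_bounded_linear bounded_linear_imp_has_derivative)
    from has_derivative_compose[OF this dg[OF pz]]
    have "((\<lambda>z. g (p z)) has_derivative (\<lambda>h. g' (p z) (p h))) (at z within ball 0 \<rho>)" .
    from has_derivative_compose[OF this du] crit[OF pz]
    show "((\<lambda>z. u (g (p z))) has_derivative (\<lambda>h. 0)) (at z within ball 0 \<rho>)"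
      by simp
  qed auto
  then obtain c where c: "\<And>z. z \<in> ball 0 \<rho> \<Longrightarrow> u (g (p z)) = c"
    by blast
  have "u (g y) = c" if "y \<in> K" "norm y < \<rho>" for y
    using c[of y] orthogonal_projection_fixes[OF K p(2,3) that(1)] that(2) by simp
  then show ?thesis
    by blast
qed

section \<open>The critical set near a critical point\<close>

locale nondegenerate_critical_point =
  fixes U :: "(real^'n) set" and u :: "real^'n \<Rightarrow> real" and p :: "real^'n \<Rightarrow> real^'n"
  assumes U: "open U" and zero_in_U: "0 \<in> U" and C2: "Ck_on 2 U u" and crit: "grad u 0 = 0"
    and nondegenerate: "\<And>y. y \<in> U \<Longrightarrow> hess u 0 *v grad u y = 0 \<Longrightarrow> grad u y = 0"
    and p: "linear p" "\<And>x. p x \<in> {v. hess u 0 *v v = 0}"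
      "\<And>x. x - p x \<in> orthogonal_comp {v. hess u 0 *v v = 0}"
begin

abbreviation K :: "(real^'n) set" where
  "K \<equiv> {v. hess u 0 *v v = 0}"

lemma subspace_K: "subspace K"
  by (rule subspace_matrix_kernel)

lemma p_fixes_K: "k \<in> K \<Longrightarrow> p k = k"
  using orthogonal_projection_fixes[OF subspace_K p(2,3)] .

lemma norm_p_le: "norm (p z) \<le> norm z"
  using norm_orthogonal_projection_le[OF p(2,3)] .

text \<open>On the critical set \<Phi> agrees with p, so a local inverse of \<Phi>, restricted to K,
  parametrizes the critical points near 0.\<close>

definition \<Phi> :: "real^'n \<Rightarrow> real^'n" where
  "\<Phi> z = p z + grad u z"

definition \<Phi>' :: "real^'n \<Rightarrow> (real^'n) \<Rightarrow>\<^sub>L (real^'n)" where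
  "\<Phi>' z = Blinfun (\<lambda>h. p h + hess u z *v h)"

lemma \<Phi>'_apply: "blinfun_apply (\<Phi>' z) = (\<lambda>h. p h + hess u z *v h)"
proof -
  have "linear (\<lambda>h. p h + hess u z *v h)"
    by (intro linear_compose_add p(1) matrix_vector_mul_linear)
  then show ?thesis
    unfolding \<Phi>'_def by (simp add: linear_conv_bounded_linear bounded_linear_Blinfun_apply)
qed

lemma \<Phi>_has_derivative: "z \<in> U \<Longrightarrow> (\<Phi> has_derivative blinfun_apply (\<Phi>' z)) (at z)"
  unfolding \<Phi>'_apply \<Phi>_def
  using p(1) by (intro has_derivative_add hess_has_derivative[OF C2 U])
    (simp_all add: linear_conv_bounded_linear bounded_linear_imp_has_derivative)

lemma continuous_on_\<Phi>': "continuous_on U \<Phi>'"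
proof (rule continuous_on_blinfun_componentwise)
  fix i :: "real^'n"
  show "continuous_on U (\<lambda>z. \<Phi>' z i)"
    unfolding \<Phi>'_apply
    by (intro continuous_on_add continuous_on_const continuous_on_matrix_vector_mult continuous_on_hess[OF C2 U])
qed

text \<open>Since hess u 0 is symmetric, its range is orthogonal to its kernel K, so adding the
  projection onto K makes the derivative of \<Phi> at 0 invertible.\<close>
lemma \<Phi>'_0_left_invertible: "\<exists>L. L o\<^sub>L \<Phi>' 0 = id_blinfun"
proof -
  define L0 where "L0 h = p h + hess u 0 *v h" for h
  have "linear L0"
    unfolding L0_def by (intro linear_compose_add p(1) matrix_vector_mul_linear)
  have sym: "transpose (hess u 0) = hess u 0"
    using hessian_symmetric[OF U zero_in_U grad_has_derivative[OF C2 U] hess_has_derivative[OF C2 U zero_in_U]] .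
  have "h = 0" if "L0 h = 0" for h
  proof -
    have Hh: "hess u 0 *v h = - p h"
      using that by (simp add: L0_def eq_neg_iff_add_eq_0 add.commute)
    have "hess u 0 *v h \<in> K"
      unfolding Hh by (rule subspace_neg[OF subspace_K p(2)])
    moreover have "hess u 0 *v h \<in> orthogonal_comp K"
      by (rule symmetric_matrix_range_orthogonal_kernel[OF sym])
    ultimately have "hess u 0 *v h = 0"
      using orthogonal_Int_0[OF subspace_K] by blast
    then show "h = 0"
      using Hh p_fixes_K[of h] by simp
  qed
  then have "inj L0"
    using \<open>linear L0\<close> by (simp add: linear_inj_iff_eq_0)
  then obtain G where G: "linear G" "G \<circ> L0 = id"
    using linear_injective_left_inverse[OF \<open>linear L0\<close>] by blast
  have "Blinfun G o\<^sub>L \<Phi>' 0 = id_blinfun"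
    using G by (intro blinfun_eqI)
      (simp add: bounded_linear_Blinfun_apply linear_conv_bounded_linear \<Phi>'_apply
        pointfree_idE L0_def[symmetric])
  then show ?thesis ..
qed


lemma local_parametrization:
  obtains \<rho> r g and g' :: "real^'n \<Rightarrow> (real^'n) \<Rightarrow>\<^sub>L (real^'n)"
  where "0 < r" "r \<le> \<rho>" "ball 0 r \<subseteq> U" "g 0 = 0"
    "\<And>z. z \<in> ball 0 r \<Longrightarrow> grad u z = 0 \<Longrightarrow> g (p z) = z"
    "\<And>y. y \<in> K \<Longrightarrow> norm y < \<rho> \<Longrightarrow> g y \<in> U \<and> grad u (g y) = 0 \<and> p (g y) = y"
    "\<And>y. norm y < \<rho> \<Longrightarrow> (g has_derivative blinfun_apply (g' y)) (at y)"
    "continuous_on (ball 0 \<rho>) g'"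
    "\<And>y k. norm y < \<rho> \<Longrightarrow> k \<in> K \<Longrightarrow> norm (g' y k - k) \<le> norm k / 2"
proof -
  obtain L where "L o\<^sub>L \<Phi>' 0 = id_blinfun"
    using \<Phi>'_0_left_invertible by blast
  then obtain U' V g g' where U': "open U'" "U' \<subseteq> U" "0 \<in> U'" and V: "open V" "\<Phi> 0 \<in> V"
      and hom: "homeomorphism U' V \<Phi> g"
      and dg: "\<And>y. y \<in> V \<Longrightarrow> (g has_derivative blinfun_apply (g' y)) (at y)"
      and cg': "continuous_on V g'" and g'_inv: "\<And>y x. y \<in> V \<Longrightarrow> g' y (\<Phi>' (g y) x) = x"
    using inverse_function_theorem_C1[OF U \<Phi>_has_derivative continuous_on_\<Phi>' zero_in_U] by metis
  have \<Phi>0: "\<Phi> 0 = 0"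
    using crit p(1) by (simp add: \<Phi>_def linear_0)
  have g_\<Phi>: "\<And>x. x \<in> U' \<Longrightarrow> g (\<Phi> x) = x" and \<Phi>_g: "\<And>y. y \<in> V \<Longrightarrow> \<Phi> (g y) = y"
    and gV: "g ` V = U'"
    using hom unfolding homeomorphism_def by auto
  have "0 \<in> V" "g 0 = 0"
    using V(2) g_\<Phi>[OF U'(3)] \<Phi>0 by simp_all
  have g'0: "g' 0 k = k" if "k \<in> K" for k
  proof -
    have "\<Phi>' (g 0) k = k"
      using that p_fixes_K \<open>g 0 = 0\<close> by (simp add: \<Phi>'_apply)
    then show ?thesis
      using g'_inv[OF \<open>0 \<in> V\<close>, of k] by simp
  qed
  obtain r where r: "r > 0" "ball 0 r \<subseteq> U'"
    using U'(1,3) open_contains_ball by blast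
  obtain \<rho>1 where \<rho>1: "\<rho>1 > 0" "ball 0 \<rho>1 \<subseteq> V"
    using V(1) \<open>0 \<in> V\<close> open_contains_ball by blast
  obtain \<rho>2 where \<rho>2: "\<rho>2 > 0" "\<And>y. y \<in> V \<Longrightarrow> dist y 0 < \<rho>2 \<Longrightarrow> dist (g' y) (g' 0) < 1/2"
    using cg' \<open>0 \<in> V\<close> unfolding continuous_on_iff by (meson half_gt_zero zero_less_one)
  define \<rho> where "\<rho> = min r (min \<rho>1 \<rho>2)"
  have ball_\<rho>: "ball 0 \<rho> \<subseteq> V"
    using \<rho>1 by (auto simp: \<rho>_def)
  show thesis
  proof
    show "0 < min r \<rho>" "min r \<rho> \<le> \<rho>" "g 0 = 0"
      using r \<rho>1 \<rho>2 \<open>g 0 = 0\<close> by (auto simp: \<rho>_def)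
    show "ball 0 (min r \<rho>) \<subseteq> U"
      using r U'(2) by auto
    show "g (p z) = z" if "z \<in> ball 0 (min r \<rho>)" "grad u z = 0" for z
      using g_\<Phi>[of z] r that by (auto simp: \<Phi>_def)
    show "g y \<in> U \<and> grad u (g y) = 0 \<and> p (g y) = y" if "y \<in> K" "norm y < \<rho>" for y
    proof -
      have "y \<in> V"
        using ball_\<rho> that(2) by auto
      then have gU: "g y \<in> U"
        using gV U'(2) by auto
      have grad_eq: "grad u (g y) = y - p (g y)"
        using \<Phi>_g[OF \<open>y \<in> V\<close>] by (simp add: \<Phi>_def algebra_simps)
      \<comment> \<open>y and p (g y) lie in K, hence so does grad u (g y), which therefore vanishes\<close>
      have "hess u 0 *v grad u (g y) = 0"
        using that(1) p(2)[of "g y"] by (simp add: grad_eq matrix_vector_mult_diff_distrib)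
      then have "grad u (g y) = 0"
        by (rule nondegenerate[OF gU])
      then show ?thesis
        using gU grad_eq by simp
    qed
    show "(g has_derivative blinfun_apply (g' y)) (at y)" if "norm y < \<rho>" for y
      using dg ball_\<rho> that by auto
    show "continuous_on (ball 0 \<rho>) g'"
      using cg' ball_\<rho> by (rule continuous_on_subset)
    show "norm (g' y k - k) \<le> norm k / 2" if "norm y < \<rho>" "k \<in> K" for y k
    proof -
      have "norm (g' y - g' 0) \<le> 1/2"
        using \<rho>2(2)[of y] ball_\<rho> that(1) by (auto simp: \<rho>_def dist_norm)
      then have "norm ((g' y - g' 0) k) \<le> 1/2 * norm k"
        by (metis norm_blinfun mult_right_mono norm_ge_zero order_trans)
      then show ?thesis
        using g'0[OF that(2)] by (simp add: blinfun.diff_left)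
    qed
  qed
qed


lemma critical_set_local_graph:
  obtains \<epsilon> \<Omega> f where "\<epsilon> > 0" "ball 0 \<epsilon> \<subseteq> U"
    "\<Omega> \<subseteq> K" "openin (top_of_set K) \<Omega>" "connected \<Omega>" "0 \<in> \<Omega>"
    "\<forall>x\<in>\<Omega>. f x \<in> orthogonal_comp K" "C1_on \<Omega> f"
    "ball 0 \<epsilon> \<inter> {x \<in> U. grad u x = 0} = {x + f x | x. x \<in> \<Omega>}"
    "\<exists>c. \<forall>x \<in> ball 0 \<epsilon> \<inter> {x \<in> U. grad u x = 0}. u x = c"
proof (rule local_parametrization)
  fix \<rho> r g and g' :: "real^'n \<Rightarrow> (real^'n) \<Rightarrow>\<^sub>L (real^'n)"
  assume r: "0 < r" "r \<le> \<rho>" "ball 0 r \<subseteq> U" and g0: "g 0 = 0"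
    and g_p: "\<And>z. z \<in> ball 0 r \<Longrightarrow> grad u z = 0 \<Longrightarrow> g (p z) = z"
    and g_crit: "\<And>y. y \<in> K \<Longrightarrow> norm y < \<rho> \<Longrightarrow> g y \<in> U \<and> grad u (g y) = 0 \<and> p (g y) = y"
    and dg: "\<And>y. norm y < \<rho> \<Longrightarrow> (g has_derivative blinfun_apply (g' y)) (at y)"
    and cg': "continuous_on (ball 0 \<rho>) g'"
    and near_id: "\<And>y k. norm y < \<rho> \<Longrightarrow> k \<in> K \<Longrightarrow> norm (g' y k - k) \<le> norm k / 2"
  define f where "f x = g x - x" for x
  define \<Omega> where "\<Omega> = {x \<in> K. norm x < \<rho> \<and> norm (x + f x) < r}"
  have \<Omega>_alt: "\<Omega> = K \<inter> (ball 0 \<rho> \<inter> g -` ball 0 r)"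
    by (auto simp: \<Omega>_def f_def)
  have f_perp: "f x \<in> orthogonal_comp K" if "x \<in> K" "norm x < \<rho>" for x
    using p(3)[of "g x"] g_crit[OF that] by (simp add: f_def)
  have lip: "norm (f x - f y) \<le> norm (x - y) / 2"
    if "x \<in> K" "norm x < \<rho>" "y \<in> K" "norm y < \<rho>" for x y
  proof -
    have "norm ((g x - x) - (g y - y)) \<le> 1/2 * norm (x - y)"
      by (rule lipschitz_on_subspace_of_derivative_near_identity[OF subspace_K p _ _ _ that])
        (use dg near_id in auto)
    then show ?thesis
      by (simp add: f_def)
  qed
  have "starlike \<Omega>"
    unfolding \<Omega>_def
    by (rule starlike_graph_sublevel[OF subspace_K f_perp _ lip]) (use r g0 in \<open>auto simp: f_def\<close>)
  then have "connected \<Omega>"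
    by (rule starlike_imp_connected)
  have "0 \<in> \<Omega>"
    using r g0 by (simp add: \<Omega>_def f_def)
  have "openin (top_of_set K) \<Omega>"
  proof -
    have "continuous_on (ball 0 \<rho>) g"
      using dg by (meson continuous_at_imp_continuous_on has_derivative_continuous mem_ball_0)
    then have "open (ball 0 \<rho> \<inter> g -` ball 0 r)"
      by (rule continuous_open_preimage) auto
    then show ?thesis
      unfolding \<Omega>_alt by auto
  qed
  have "C1_on \<Omega> f"
    unfolding C1_on_def
  proof (intro exI conjI ballI)
    show "(f has_derivative blinfun_apply (g' x - id_blinfun)) (at x within \<Omega>)" if "x \<in> \<Omega>" for x
    proof -
      have "(f has_derivative (\<lambda>h. g' x h - h)) (at x)"
        unfolding f_def using that by (intro has_derivative_diff dg has_derivative_ident) (simp add: \<Omega>_def)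
      moreover have "blinfun_apply (g' x - id_blinfun) = (\<lambda>h. g' x h - h)"
        by (simp add: blinfun.diff_left fun_eq_iff)
      ultimately show ?thesis
        by (simp add: has_derivative_at_withinI)
    qed
    show "continuous_on \<Omega> (\<lambda>x. g' x - id_blinfun)"
      using cg' by (intro continuous_on_diff continuous_on_const continuous_on_subset[OF cg'])
        (auto simp: \<Omega>_def)
  qed
  have graph: "ball 0 r \<inter> {x \<in> U. grad u x = 0} = {x + f x | x. x \<in> \<Omega>}"
  proof (intro equalityI subsetI)
    fix z assume z: "z \<in> ball 0 r \<inter> {x \<in> U. grad u x = 0}"
    then have "g (p z) = z"
      using g_p by blast
    moreover have "p z \<in> \<Omega>"
      using z r p(2) norm_p_le[of z] \<open>g (p z) = z\<close> by (auto simp: \<Omega>_def f_def)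
    ultimately show "z \<in> {x + f x | x. x \<in> \<Omega>}"
      by (force simp: f_def)
  next
    fix z assume "z \<in> {x + f x | x. x \<in> \<Omega>}"
    then obtain x where "x \<in> \<Omega>" "z = g x"
      by (auto simp: f_def)
    then show "z \<in> ball 0 r \<inter> {x \<in> U. grad u x = 0}"
      using g_crit by (auto simp: \<Omega>_def f_def)
  qed
  have const: "\<exists>c. \<forall>x \<in> ball 0 r \<inter> {x \<in> U. grad u x = 0}. u x = c"
  proof -
    have "\<exists>c. \<forall>y. y \<in> K \<and> norm y < \<rho> \<longrightarrow> u (g y) = c"
      by (rule constant_along_critical_family[OF subspace_K p grad_has_derivative[OF C2 U]])
        (use dg g_crit in auto)
    then obtain c where c: "\<And>y. y \<in> K \<Longrightarrow> norm y < \<rho> \<Longrightarrow> u (g y) = c"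
      by blast
    have "u z = c" if "z \<in> ball 0 r \<inter> {x \<in> U. grad u x = 0}" for z
      using c[of "p z"] g_p[of z] p(2) norm_p_le[of z] that r by auto
    then show ?thesis
      by blast
  qed
  have "\<Omega> \<subseteq> K" "\<forall>x\<in>\<Omega>. f x \<in> orthogonal_comp K"
    using f_perp by (auto simp: \<Omega>_def)
  with r \<open>openin (top_of_set K) \<Omega>\<close> \<open>connected \<Omega>\<close> \<open>0 \<in> \<Omega>\<close> \<open>C1_on \<Omega> f\<close> graph const
  show thesis
    by (intro that[of r \<Omega> f])
qed

end


theorem proposition2p4:
  fixes M D :: "(real^'n) set" and u :: "real^'n \<Rightarrow> real"
  assumes "mean_convex_hypersurface M D"
    and "arrival_time M D u"
    and "Ck_on 2 (interior D) u"
    and "0 \<in> interior D"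
    and "grad u 0 = 0"
    and "K = {v. hess u 0 *v v = 0}"
  shows "\<exists>\<epsilon>>0. \<exists>\<Omega> f.
           \<Omega> \<subseteq> K \<and> openin (top_of_set K) \<Omega> \<and> connected \<Omega> \<and> 0 \<in> \<Omega> \<and>
           (\<forall>x\<in>\<Omega>. f x \<in> orthogonal_comp K) \<and> C1_on \<Omega> f \<and>
           ball 0 \<epsilon> \<inter> singular_set D u = {x + f x | x. x \<in> \<Omega>} \<and>
           (\<exists>c. \<forall>x \<in> ball 0 \<epsilon> \<inter> singular_set D u. u x = c)"
proof -
  have sub: "viscosity_subsol (interior D) u" and super: "viscosity_supersol (interior D) u"
    using assms(2) unfolding arrival_time_def by auto
  obtain \<delta> where \<delta>: "\<delta> > 0" "ball 0 \<delta> \<subseteq> interior D"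
    "\<And>y. y \<in> ball 0 \<delta> \<Longrightarrow> hess u 0 *v grad u y = 0 \<Longrightarrow> grad u y = 0"
    using critical_near_if_gradient_in_kernel[OF sub super assms(3) open_interior assms(4,5)] by blast
  obtain p where p: "linear p" "\<And>x. p x \<in> K" "\<And>x. x - p x \<in> orthogonal_comp K"
    using orthogonal_projection_exists[OF subspace_matrix_kernel] assms(6) by blast
  interpret nondegenerate_critical_point "ball 0 \<delta>" u p
    by (rule nondegenerate_critical_point.intro) (use \<delta> p assms(3,5,6) Ck_on_subset in auto)
  show ?thesis
  proof (rule critical_set_local_graph, goal_cases)
    case (1 \<epsilon> \<Omega> f)
    have "ball 0 \<epsilon> \<inter> singular_set D u = ball 0 \<epsilon> \<inter> {x \<in> ball 0 \<delta>. grad u x = 0}"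
      using 1(2) \<delta>(2) by (auto simp: singular_set_def)
    then show ?case
      unfolding assms(6)
      by (intro exI[of _ \<epsilon>] conjI[OF 1(1)] exI[of _ \<Omega>] exI[of _ f]) (use 1 in blast)
  qed
qed

end
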